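(* For each $\gamma>0$ let $\mu^\gamma$ be a solution with sufficient regularity on $[0,T]$ of the kinetic Vlasov--Fokker--Planck equation with parameter $\gamma$, and assume $c_0:=\sup_{\gamma>0}\sup_{t\in[0,T]}\|\nabla K\star\rho_t^\gamma\|_{L^\infty}<\infty$, where $\rho_t^\gamma=\pi^x_\#\mu_t^\gamma$. Then for any $p\in[2,\infty)$, with $u_t^\gamma:=\mu_t^\gamma e^H$ (the density of $\mu_t^\gamma$ with respect to $\eta$), \[\|u_t^\gamma\|^p_{L^p(\eta)}\le\|u_0^\gamma\|^p_{L^p(\eta)}+\frac{p(p-1)c_0^2}2\int_0^t\|u_r^\gamma\|^p_{L^p(\eta)}dr\quad\text{for all }t\in[0,T].\] In particular, $\|\mu_t^\gamma\|_{L^p_H}\le\|\mu_0^\gamma\|_{L^p_H}e^{c_0^2(p-1)t/2}$ for all $t\in[0,T]$.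
   Context: Standing assumptions on $\Phi:\mathbb{R}^d\to[0,\infty)$: locally Lipschitz; $|\nabla\Phi(x)|\le c_\Phi(1+|x|)$ and $\nabla\Phi$ Lipschitz with constant $\le c_\Phi$; $\sup_x|\nabla\Phi|^re^{-\Phi}<\infty$ for all $r\in[1,\infty)$. $H(x,v)=\Phi(x)+|v|^2/2$; $\|\mu\|_{L^p_H}=(\iint|\mu|^pe^{(p-1)H}dxdv)^{1/p}$; $\eta(dxdv)=e^{-\Phi(x)}dx\,\mathscr{N}^d(dv)$ with $\mathscr{N}^d$ the standard Gaussian. $\mathsf{F}(x,\rho)=-\nabla\Phi(x)-(\nabla K\star\rho)(x)$. Kinetic equation: $\partial_t\mu_t+\gamma v\cdot\nabla_x\mu_t+\gamma\nabla_v\cdot(\mu_t(\mathsf{F}(x,\rho_t)-\gamma v))=\gamma^2\Delta_v\mu_t$, $\rho_t=\pi^x_\#\mu_t$. *)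

theory Defs
  imports "HOL-Analysis.Analysis"
begin

text \<open>Phase space: position x and velocity v both live in R^d, modelled by a
  Euclidean space 'a with DIM('a) = d.  A time-dependent phase-space density is
  a function  m :: real => 'a => 'a => real,  m t x v.\<close>

definition Ham :: "('a::euclidean_space \<Rightarrow> real) \<Rightarrow> 'a \<Rightarrow> 'a \<Rightarrow> real" where
  "Ham \<Phi> x v = \<Phi> x + (norm v)\<^sup>2 / 2"

definition eta :: "('a::euclidean_space \<Rightarrow> real) \<Rightarrow> ('a \<times> 'a) measure" where
  "eta \<Phi> = density lborel (\<lambda>(x,v). ennreal (exp (- \<Phi> x) *
      ((2 * pi) powr (- real DIM('a) / 2) * exp (- (norm v)\<^sup>2 / 2))))"

definition Lp_eta_pow :: "('a::euclidean_space \<Rightarrow> real) \<Rightarrow> real \<Rightarrow> ('a \<Rightarrow> 'a \<Rightarrow> real) \<Rightarrow> ennreal" where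
  "Lp_eta_pow \<Phi> p u = (\<integral>\<^sup>+ z. ennreal (\<bar>u (fst z) (snd z)\<bar> powr p) \<partial>(eta \<Phi>))"

definition LpH_norm :: "('a::euclidean_space \<Rightarrow> real) \<Rightarrow> real \<Rightarrow> ('a \<Rightarrow> 'a \<Rightarrow> real) \<Rightarrow> real" where
  "LpH_norm \<Phi> p m = (\<integral> z. \<bar>m (fst z) (snd z)\<bar> powr p * exp ((p - 1) * Ham \<Phi> (fst z) (snd z)) \<partial>lborel) powr (1 / p)"

definition xmarg :: "('a::euclidean_space \<Rightarrow> 'a \<Rightarrow> real) \<Rightarrow> 'a \<Rightarrow> real" where
  "xmarg m x = (\<integral> v. m x v \<partial>lborel)"

definition conv_field :: "('a::euclidean_space \<Rightarrow> 'a) \<Rightarrow> ('a \<Rightarrow> real) \<Rightarrow> 'a \<Rightarrow> 'a" where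
  "conv_field gK \<rho> x = (\<integral> y. \<rho> y *\<^sub>R gK (x - y) \<partial>lborel)"

definition force :: "('a::euclidean_space \<Rightarrow> 'a) \<Rightarrow> ('a \<Rightarrow> 'a) \<Rightarrow> ('a \<Rightarrow> real) \<Rightarrow> 'a \<Rightarrow> 'a" where
  "force gPhi gK \<rho> x = - gPhi x - conv_field gK \<rho> x"

text \<open>A sufficiently regular (classical) solution on [0,T] of the kinetic
  Vlasov--Fokker--Planck equation with parameter gamma:
    d_t mu + gamma v.grad_x mu + gamma div_v(mu (F(x,rho_t) - gamma v)) = gamma^2 Lap_v mu.
  mt, mx, mv, mvv are the time derivative, x-gradient, v-gradient and v-Hessian
  (as a linear map).  The divergence is written out:
    div_v(mu (F - gamma v)) = (F - gamma v).grad_v mu - gamma d mu.\<close>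
definition regular_VFP_solution ::
  "('a::euclidean_space \<Rightarrow> real) \<Rightarrow> ('a \<Rightarrow> 'a) \<Rightarrow> ('a \<Rightarrow> 'a) \<Rightarrow> real \<Rightarrow> real
    \<Rightarrow> (real \<Rightarrow> 'a \<Rightarrow> 'a \<Rightarrow> real) \<Rightarrow> bool" where
  "regular_VFP_solution \<Phi> gPhi gK \<gamma> T m \<longleftrightarrow>
    (\<exists>mt mx mv mvv.
      (\<forall>t\<in>{0..T}. \<forall>x v. m t x v \<ge> 0) \<and>
      (\<forall>t\<in>{0..T}. integrable lborel (\<lambda>z::'a\<times>'a. m t (fst z) (snd z)) \<and>
                   (\<integral> z. m t (fst z) (snd z) \<partial>lborel) = 1) \<and>
      (\<forall>t\<in>{0..T}. \<forall>x v. ((\<lambda>s. m s x v) has_real_derivative mt t x v) (at t within {0..T})) \<and>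
      (\<forall>t\<in>{0..T}. \<forall>x v. ((\<lambda>y. m t y v) has_derivative (\<lambda>h. mx t x v \<bullet> h)) (at x)) \<and>
      (\<forall>t\<in>{0..T}. \<forall>x v. ((\<lambda>w. m t x w) has_derivative (\<lambda>h. mv t x v \<bullet> h)) (at v)) \<and>
      (\<forall>t\<in>{0..T}. \<forall>x v. ((\<lambda>w. mv t x w) has_derivative mvv t x v) (at v)) \<and>
      continuous_on ({0..T} \<times> UNIV) (\<lambda>(t,x,v). m t x v) \<and>
      continuous_on ({0..T} \<times> UNIV) (\<lambda>(t,x,v). mt t x v) \<and>
      continuous_on ({0..T} \<times> UNIV) (\<lambda>(t,x,v). mx t x v) \<and>
      continuous_on ({0..T} \<times> UNIV) (\<lambda>(t,x,v). mv t x v) \<and>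
      (\<forall>b. continuous_on ({0..T} \<times> UNIV) (\<lambda>(t,x,v). mvv t x v b)) \<and>
      (\<forall>q\<ge>1. \<forall>k::nat. \<exists>g::'a\<times>'a\<Rightarrow>real. integrable lborel g \<and>
         (\<forall>t\<in>{0..T}. \<forall>x v.
            (1 + norm x + norm v) ^ k *
            (\<bar>m t x v\<bar> + \<bar>mt t x v\<bar> + norm (mx t x v) + norm (mv t x v)
               + (\<Sum>b\<in>Basis. norm (mvv t x v b))) powr q
            * exp ((q - 1) * Ham \<Phi> x v) \<le> g (x, v))) \<and>
      (\<forall>t\<in>{0..T}. \<forall>x v.
         mt t x v + \<gamma> * (v \<bullet> mx t x v)
         + \<gamma> * ((force gPhi gK (xmarg (m t)) x - \<gamma> *\<^sub>R v) \<bullet> mv t x v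
                 - \<gamma> * real DIM('a) * m t x v)
         = \<gamma>\<^sup>2 * (\<Sum>b\<in>Basis. mvv t x v b \<bullet> b)))"

end

theory Submission
  imports Defs
begin

text \<open>Let \<open>W = exp ((p - 1) H)\<close> and \<open>E(t) = \<integral>\<integral> \<mu>\<^sub>t\<^sup>p W\<close>; up to the Gaussian normalising
  constant \<open>E(t)\<close> is \<open>\<parallel>u\<^sub>t\<parallel>\<^sup>p\<close> in \<open>L\<^sup>p(\<eta>)\<close>, and \<open>E(t)\<^sup>1\<^sup>/\<^sup>p = \<parallel>\<mu>\<^sub>t\<parallel>\<close> in \<open>L\<^sup>p\<^sub>H\<close>.
  Differentiate \<open>E\<close> under the integral and insert the equation. Up to derivatives in \<open>x\<close> and
  \<open>v\<close> of explicit fluxes, whose integrals vanish, \<open>E'\<close> is the integral of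
  \<open>- p (p - 1) \<mu>\<^sup>p\<^sup>-\<^sup>2 W (\<gamma>\<^sup>2 \<bar>G\<bar>\<^sup>2 + \<gamma> \<mu> (b \<bullet> G))\<close> with \<open>G = \<nabla>\<^sub>v\<mu> + \<mu> v\<close> and the interaction
  force \<open>b = \<nabla>K \<star> \<rho>\<^sub>t\<close>. Completing the square bounds this by \<open>p (p - 1) \<bar>b\<bar>\<^sup>2 \<mu>\<^sup>p W / 4\<close>, so
  \<open>E' \<le> p (p - 1) c\<^sub>0\<^sup>2 E / 4\<close>. Integrating in time gives the first estimate, Gronwall's
  inequality the second.\<close>

section \<open>Integrals of derivatives over Euclidean space\<close>

lemma lborel_integral_translate:
  fixes f :: "'a::euclidean_space \<Rightarrow> real"
  assumes [measurable]: "f \<in> borel_measurable borel"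
  shows "(\<integral>z. f (z + c) \<partial>lborel) = (\<integral>z. f z \<partial>lborel)"
proof -
  have "(\<integral>z. f z \<partial>lborel) = (\<integral>z. f z \<partial>distr lborel borel ((+) c))"
    by (simp add: lborel_distr_plus)
  also have "\<dots> = (\<integral>z. f (c + z) \<partial>lborel)"
    by (rule integral_distr) auto
  finally show ?thesis
    by (simp add: add.commute)
qed

lemma lborel_integrable_translate:
  fixes f :: "'a::euclidean_space \<Rightarrow> real"
  assumes f: "integrable lborel f"
  shows "integrable lborel (\<lambda>z. f (z + c))"
proof -
  have [measurable]: "f \<in> borel_measurable borel"
    using borel_measurable_integrable[OF f] by simp
  have "integrable (distr lborel borel ((+) c)) f"
    using f by (simp add: lborel_distr_plus)
  then have "integrable lborel (\<lambda>z. f (c + z))"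
    by (subst (asm) integrable_distr_eq) auto
  then show ?thesis
    by (simp add: add.commute)
qed

lemma lborel_integral_Icc_FTC:
  fixes F f :: "real \<Rightarrow> real"
  assumes "a \<le> b" and "continuous_on {a..b} f"
    and "\<And>s. s \<in> {a..b} \<Longrightarrow> (F has_real_derivative f s) (at s within {a..b})"
  shows "(\<integral>s. indicator {a..b} s * f s \<partial>lborel) = F b - F a"
proof -
  have "(LBINT s=ereal a..ereal b. f s) = F b - F a"
    by (rule interval_integral_FTC_finite)
      (use assms in \<open>auto simp: has_real_derivative_iff_has_vector_derivative[symmetric] min_def max_def\<close>)
  then show ?thesis
    using assms(1) by (simp add: interval_integral_Icc set_lebesgue_integral_def)
qed

lemma integral_line_derivative_eq_0:
  fixes f df :: "'b::euclidean_space \<Rightarrow> real" and e :: 'b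
  assumes f: "integrable lborel f" and df: "integrable lborel df"
    and deriv: "\<And>z s. ((\<lambda>s. f (z + s *\<^sub>R e)) has_real_derivative df (z + s *\<^sub>R e)) (at s)"
    and cont: "\<And>z. continuous_on UNIV (\<lambda>s. df (z + s *\<^sub>R e))"
  shows "(\<integral>z. df z \<partial>lborel) = 0"
proof -
  have [measurable]: "df \<in> borel_measurable borel" "f \<in> borel_measurable borel"
    using borel_measurable_integrable[OF df] borel_measurable_integrable[OF f] by simp_all
  define h where "h = (\<lambda>(s::real, z::'b). indicator {0..1} s * df (z + s *\<^sub>R e))"
  have [measurable]: "h \<in> borel_measurable (lborel \<Otimes>\<^sub>M lborel)"
    unfolding h_def by measurable
  have h_integrable: "integrable (lborel \<Otimes>\<^sub>M lborel) h"
  proof (rule lborel_pair.Fubini_integrable)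
    have "(\<lambda>s. \<integral>z. norm (h (s, z)) \<partial>lborel) = (\<lambda>s. indicator {0..1} s * (\<integral>z. norm (df z) \<partial>lborel))"
      using lborel_integral_translate[where f="\<lambda>z. \<bar>df z\<bar>"]
      by (auto simp: h_def abs_mult indicator_def fun_eq_iff)
    then show "integrable lborel (\<lambda>s. \<integral>z. norm (h (s, z)) \<partial>lborel)"
      by simp
    show "AE s in lborel. integrable lborel (\<lambda>z. h (s, z))"
      by (auto simp: h_def intro!: integrable_mult_right lborel_integrable_translate df)
  qed measurable
  have "(\<integral>s. (\<integral>z. h (s, z) \<partial>lborel) \<partial>lborel) = (\<integral>z. (\<integral>s. h (s, z) \<partial>lborel) \<partial>lborel)"
    using lborel_pair.Fubini_integral[of "\<lambda>s z. h (s, z)"] h_integrable by simp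
  also have "\<dots> = (\<integral>z. f (z + e) - f z \<partial>lborel)"
  proof (intro Bochner_Integration.integral_cong refl)
    fix z
    have "(\<integral>s. indicator {0..1} s * df (z + s *\<^sub>R e) \<partial>lborel) = f (z + 1 *\<^sub>R e) - f (z + 0 *\<^sub>R e)"
      by (rule lborel_integral_Icc_FTC[where F="\<lambda>s. f (z + s *\<^sub>R e)"])
        (use cont[of z] deriv[of z] in \<open>auto intro: continuous_on_subset has_field_derivative_at_within\<close>)
    then show "(\<integral>s. h (s, z) \<partial>lborel) = f (z + e) - f z"
      by (simp add: h_def)
  qed
  also have "\<dots> = 0"
    using lborel_integral_translate[of f e] by (simp add: lborel_integrable_translate f)
  finally show ?thesis
    by (simp add: h_def lborel_integral_translate)
qed

lemma integral_partial_derivative_eq_0: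
  fixes F dF :: "'a::euclidean_space \<Rightarrow> 'b::euclidean_space \<Rightarrow> real"
  assumes "integrable lborel (\<lambda>z. F (fst z) (snd z))" "integrable lborel (\<lambda>z. dF (fst z) (snd z))"
    and "\<And>x v s. ((\<lambda>s. F (x + s *\<^sub>R i) (v + s *\<^sub>R j)) has_real_derivative dF (x + s *\<^sub>R i) (v + s *\<^sub>R j)) (at s)"
    and "\<And>x v. continuous_on UNIV (\<lambda>s. dF (x + s *\<^sub>R i) (v + s *\<^sub>R j))"
  shows "(\<integral>z. dF (fst z) (snd z) \<partial>lborel) = 0"
  by (rule integral_line_derivative_eq_0[where f="\<lambda>z. F (fst z) (snd z)" and e="(i, j)"])
    (use assms in auto)

lemma continuous_on_along_line:
  fixes G :: "'a::euclidean_space \<Rightarrow> 'b::euclidean_space \<Rightarrow> real"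
  assumes "continuous_on UNIV (\<lambda>z. G (fst z) (snd z))"
  shows "continuous_on UNIV (\<lambda>s. G (x + s *\<^sub>R i) (v + s *\<^sub>R j))"
proof -
  have "continuous_on UNIV ((\<lambda>z. G (fst z) (snd z)) \<circ> (\<lambda>s. (x + s *\<^sub>R i, v + s *\<^sub>R j)))"
    by (rule continuous_on_compose[OF _ continuous_on_subset[OF assms]]) (auto intro!: continuous_intros)
  then show ?thesis
    by (simp add: o_def)
qed

lemma has_real_derivative_along_line:
  assumes "(f has_derivative (\<lambda>h. D \<bullet> h)) (at (x + s *\<^sub>R i))"
  shows "((\<lambda>s. f (x + s *\<^sub>R i)) has_real_derivative D \<bullet> i) (at s)"
proof -
  have "((\<lambda>s. x + s *\<^sub>R i) has_derivative (\<lambda>h. h *\<^sub>R i)) (at s)"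
    by (auto intro!: derivative_eq_intros)
  from has_derivative_compose[OF this assms]
  have "((\<lambda>s. f (x + s *\<^sub>R i)) has_derivative (\<lambda>h. D \<bullet> (h *\<^sub>R i))) (at s)" .
  moreover have "(\<lambda>h. D \<bullet> (h *\<^sub>R i)) = (*) (D \<bullet> i)"
    by (auto simp: fun_eq_iff)
  ultimately show ?thesis
    by (simp add: has_field_derivative_def)
qed

lemma has_real_derivative_along_line_inner:
  fixes f :: "'a::euclidean_space \<Rightarrow> 'a"
  assumes "(f has_derivative f') (at (x + s *\<^sub>R i))"
  shows "((\<lambda>s. f (x + s *\<^sub>R i) \<bullet> j) has_real_derivative f' i \<bullet> j) (at s)"
proof -
  have "((\<lambda>s. x + s *\<^sub>R i) has_derivative (\<lambda>h. h *\<^sub>R i)) (at s)"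
    by (auto intro!: derivative_eq_intros)
  from has_derivative_compose[OF this assms]
  have "((\<lambda>s. f (x + s *\<^sub>R i)) has_derivative (\<lambda>h. f' (h *\<^sub>R i))) (at s)" .
  then have "((\<lambda>s. f (x + s *\<^sub>R i) \<bullet> j) has_derivative (\<lambda>h. f' (h *\<^sub>R i) \<bullet> j)) (at s)"
    by (auto intro!: derivative_eq_intros)
  moreover have "(\<lambda>h. f' (h *\<^sub>R i) \<bullet> j) = (*) (f' i \<bullet> j)"
    using linear_cmul[OF has_derivative_linear[OF assms]] by (auto simp: fun_eq_iff)
  ultimately show ?thesis
    by (simp add: has_field_derivative_def)
qed

lemma has_real_derivative_powr_nonneg:
  fixes g :: "real \<Rightarrow> real"
  assumes g: "(g has_real_derivative g') (at t within S)"
    and nonneg: "\<And>s. s \<in> S \<Longrightarrow> 0 \<le> g s" and "t \<in> S" and q: "1 < q"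
  shows "((\<lambda>s. g s powr q) has_real_derivative q * g t powr (q - 1) * g') (at t within S)"
proof (cases "g t > 0")
  case True
  show ?thesis
    using DERIV_chain2[OF has_real_derivative_powr[OF True, of q] g] by (simp add: mult.assoc)
next
  case False
  with assms have gt: "g t = 0"
    by force
  \<comment> \<open>the difference quotient of \<open>g powr q\<close> is that of \<open>g\<close> times \<open>g powr (q - 1) \<longrightarrow> 0\<close>\<close>
  have lim: "((\<lambda>y. (g y - g t) / (y - t) * g y powr (q - 1)) \<longlongrightarrow> g' * 0) (at t within S)"
  proof (rule tendsto_mult)
    show "((\<lambda>y. (g y - g t) / (y - t)) \<longlongrightarrow> g') (at t within S)"
      using g by (simp add: has_field_derivative_iff)
    have "(g \<longlongrightarrow> 0) (at t within S)"
      using DERIV_continuous[OF g] gt by (simp add: continuous_within)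
    then show "((\<lambda>y. g y powr (q - 1)) \<longlongrightarrow> 0) (at t within S)"
      by (rule tendsto_zero_powrI[OF _ tendsto_const]) (auto simp: q eventually_at_filter nonneg)
  qed
  have eq: "\<forall>\<^sub>F y in at t within S. (g y - g t) / (y - t) * g y powr (q - 1) = (g y powr q - g t powr q) / (y - t)"
    unfolding eventually_at_filter
  proof (intro always_eventually allI impI)
    fix y assume "y \<noteq> t" "y \<in> S"
    then have "g y * g y powr (q - 1) = g y powr q"
      using nonneg[of y] by (cases "g y = 0") (auto simp: powr_mult_base)
    then show "(g y - g t) / (y - t) * g y powr (q - 1) = (g y powr q - g t powr q) / (y - t)"
      using gt q by simp
  qed
  show ?thesis
    unfolding has_field_derivative_iff using gt tendsto_cong[OF eq] lim by simp
qed

lemma borel_measurable_lborel_continuous_onI: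
  "continuous_on UNIV f \<Longrightarrow> f \<in> borel_measurable lborel"
  by (simp add: borel_measurable_continuous_onI)

lemma continuous_on_slice:
  assumes "continuous_on (A \<times> UNIV) (\<lambda>(t, x, v). f t x v)" and "t \<in> A"
  shows "continuous_on UNIV (\<lambda>z. f t (fst z) (snd z))"
proof -
  have "continuous_on UNIV ((\<lambda>(t, x, v). f t x v) \<circ> (\<lambda>z. (t, z)))"
    by (rule continuous_on_compose[OF _ continuous_on_subset[OF assms(1)]])
      (use assms(2) in \<open>auto intro!: continuous_intros\<close>)
  then show ?thesis
    by (simp add: o_def case_prod_beta)
qed

lemma AE_lborel_fst:
  assumes "AE x in lborel. P x"
  shows "AE z in (lborel :: ('a::euclidean_space \<times> 'b::euclidean_space) measure). P (fst z)"
proof -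
  from assms obtain N where N: "{x \<in> space lborel. \<not> P x} \<subseteq> N" "emeasure lborel N = 0" "N \<in> sets lborel"
    by (rule AE_E)
  then have "N \<times> UNIV \<in> null_sets (lborel \<Otimes>\<^sub>M (lborel :: 'b measure))"
    by (intro lborel.times_in_null_sets1) auto
  then have "N \<times> UNIV \<in> null_sets (lborel :: ('a \<times> 'b) measure)"
    by (simp add: lborel_prod)
  then show ?thesis
    by (rule AE_I') (use N in auto)
qed

lemma integrable_indicator_Icc_dominated:
  fixes H :: "real \<Rightarrow> 'b::euclidean_space \<Rightarrow> real"
  assumes [measurable]: "(\<lambda>y. indicator {a..b} (fst y) * H (fst y) (snd y)) \<in> borel_measurable (lborel \<Otimes>\<^sub>M lborel)"
    and g: "integrable lborel g" and H_le: "\<And>s z. s \<in> {a..b} \<Longrightarrow> \<bar>H s z\<bar> \<le> g z" and "a \<le> b"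
  shows "integrable (lborel \<Otimes>\<^sub>M lborel) (\<lambda>y. indicator {a..b} (fst y) * H (fst y) (snd y))"
proof (rule lborel_pair.Fubini_integrable)
  have h_le: "\<bar>indicator {a..b} s * H s z\<bar> \<le> g z" for s z
    using H_le[of s z] H_le[of a z] \<open>a \<le> b\<close> by (auto simp: indicator_def)
  have slice: "integrable lborel (\<lambda>z. indicator {a..b} s * H s z)" for s
  proof (rule Bochner_Integration.integrable_bound[OF g])
    show "(\<lambda>z. indicator {a..b} s * H s z) \<in> borel_measurable lborel"
      using measurable_Pair2[OF assms(1), of s] by simp
    show "AE z in lborel. norm (indicator {a..b} s * H s z) \<le> norm (g z)"
      using h_le by (auto intro: order_trans[OF _ abs_ge_self])
  qed
  then show "AE s in lborel. integrable lborel (\<lambda>z. indicator {a..b} (fst (s, z)) * H (fst (s, z)) (snd (s, z)))"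
    by simp
  show "integrable lborel (\<lambda>s. \<integral>z. norm (indicator {a..b} (fst (s, z)) * H (fst (s, z)) (snd (s, z))) \<partial>lborel)"
  proof (rule Bochner_Integration.integrable_bound)
    show "integrable lborel (\<lambda>s. indicator {a..b} s * (\<integral>z. g z \<partial>lborel))"
      using \<open>a \<le> b\<close> by (intro integrable_mult_left integrable_real_indicator) auto
    have "(\<integral>z. \<bar>indicator {a..b} s * H s z\<bar> \<partial>lborel) \<le> indicator {a..b} s * (\<integral>z. g z \<partial>lborel)" for s
    proof (cases "s \<in> {a..b}")
      case True
      have "(\<integral>z. \<bar>indicator {a..b} s * H s z\<bar> \<partial>lborel) \<le> (\<integral>z. g z \<partial>lborel)"
        using Bochner_Integration.integrable_abs[OF slice] g h_le by (rule integral_mono)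
      then show ?thesis
        using True by simp
    qed simp
    then show "AE s in lborel. norm (\<integral>z. norm (indicator {a..b} (fst (s, z)) * H (fst (s, z)) (snd (s, z))) \<partial>lborel)
        \<le> norm (indicator {a..b} s * (\<integral>z. g z \<partial>lborel))"
      by (intro AE_I2) (auto simp: Bochner_Integration.integral_nonneg intro: order_trans[OF _ abs_ge_self])
  qed measurable
qed measurable

lemma has_integral_parametric_derivative:
  fixes F G :: "real \<Rightarrow> 'b::euclidean_space \<Rightarrow> real"
  assumes "a \<le> b"
    and cont: "continuous_on ({a..b} \<times> UNIV) (\<lambda>y. G (fst y) (snd y))"
    and deriv: "\<And>s z. s \<in> {a..b} \<Longrightarrow> ((\<lambda>s. F s z) has_real_derivative G s z) (at s within {a..b})"
    and g: "integrable lborel g" and G_le: "\<And>s z. s \<in> {a..b} \<Longrightarrow> \<bar>G s z\<bar> \<le> g z"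
    and "integrable lborel (F a)" "integrable lborel (F b)"
  shows "((\<lambda>s. \<integral>z. G s z \<partial>lborel) has_integral (\<integral>z. F b z \<partial>lborel) - (\<integral>z. F a z \<partial>lborel)) {a..b}"
proof -
  define h where "h = (\<lambda>y::real \<times> 'b. indicator {a..b} (fst y) * G (fst y) (snd y))"
  have "(\<lambda>y. indicator ({a..b} \<times> UNIV) y *\<^sub>R G (fst y) (snd y)) \<in> borel_measurable borel"
    by (rule borel_measurable_continuous_on_indicator[OF _ cont])
      (intro borel_closed closed_Times closed_atLeastAtMost closed_UNIV)
  moreover have "(\<lambda>y. indicator ({a..b} \<times> UNIV) y *\<^sub>R G (fst y) (snd y)) = h"
    by (auto simp: h_def fun_eq_iff indicator_def)
  ultimately have "h \<in> borel_measurable (lborel \<Otimes>\<^sub>M lborel)"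
    by (simp only: lborel_prod measurable_lborel2)
  then have h_integrable: "integrable (lborel \<Otimes>\<^sub>M lborel) h"
    unfolding h_def using g G_le \<open>a \<le> b\<close> by (rule integrable_indicator_Icc_dominated)
  have "(\<integral>s. (\<integral>z. h (s, z) \<partial>lborel) \<partial>lborel) = (\<integral>z. (\<integral>s. h (s, z) \<partial>lborel) \<partial>lborel)"
    using lborel_pair.Fubini_integral[of "\<lambda>s z. h (s, z)"] h_integrable by simp
  also have "\<dots> = (\<integral>z. F b z - F a z \<partial>lborel)"
  proof (intro Bochner_Integration.integral_cong refl)
    fix z
    have "continuous_on {a..b} ((\<lambda>y. G (fst y) (snd y)) \<circ> (\<lambda>s. (s, z)))"
      by (rule continuous_on_compose[OF _ continuous_on_subset[OF cont]]) (auto intro!: continuous_intros)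
    then have "continuous_on {a..b} (\<lambda>s. G s z)"
      by (simp add: o_def)
    from lborel_integral_Icc_FTC[OF \<open>a \<le> b\<close> this deriv]
    show "(\<integral>s. h (s, z) \<partial>lborel) = F b z - F a z"
      by (simp add: h_def)
  qed
  also have "\<dots> = (\<integral>z. F b z \<partial>lborel) - (\<integral>z. F a z \<partial>lborel)"
    using assms(6,7) by simp
  finally have "(\<integral>s. indicator {a..b} s * (\<integral>z. G s z \<partial>lborel) \<partial>lborel)
      = (\<integral>z. F b z \<partial>lborel) - (\<integral>z. F a z \<partial>lborel)"
    by (simp add: h_def)
  moreover have "set_integrable lborel {a..b} (\<lambda>s. \<integral>z. G s z \<partial>lborel)"
    using lborel_pair.integrable_fst'[OF h_integrable] by (simp add: set_integrable_def h_def)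
  ultimately show ?thesis
    using set_borel_integral_eq_integral[of "{a..b}" "\<lambda>s. \<integral>z. G s z \<partial>lborel"]
    by (auto simp: set_lebesgue_integral_def intro: integrable_integral)
qed

lemma Gronwall_integral_inequality:

  fixes f :: "real \<Rightarrow> real"
  assumes cont: "continuous_on {0..T} f" and C: "0 \<le> C"
    and ineq: "\<And>u. u \<in> {0..T} \<Longrightarrow> f u \<le> a + C * integral {0..u} f"
    and t: "t \<in> {0..T}"
  shows "f t \<le> a * exp (C * t)"
proof -
  define I where "I = (\<lambda>u. integral {0..u} f)"
  define G where "G = (\<lambda>u. exp (- C * u) * (a + C * I u))"
  have I_cont: "continuous_on {0..T} I"
    unfolding I_def by (rule indefinite_integral_continuous_1[OF integrable_continuous_interval[OF cont]])
  have "G t \<le> G 0"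
  proof (rule DERIV_nonpos_imp_decreasing_open[of 0 t G])
    show "0 \<le> t"
      using t by simp
    show "continuous_on {0..t} G"
      unfolding G_def using t by (intro continuous_intros continuous_on_subset[OF I_cont]) auto
    fix u assume u: "0 < u" "u < t"
    then have uT: "u \<in> {0..T}" and "0 < u" "u < T"
      using t by auto
    then have "(I has_real_derivative f u) (at u)"
      using integral_has_vector_derivative[OF cont uT] at_within_Icc_at[of 0 u T]
      by (simp add: I_def has_real_derivative_iff_has_vector_derivative)
    then have "(G has_real_derivative - C * exp (- C * u) * (a + C * I u) + exp (- C * u) * (C * f u)) (at u)"
      unfolding G_def by (auto intro!: derivative_eq_intros)
    moreover have "- C * exp (- C * u) * (a + C * I u) + exp (- C * u) * (C * f u)
        = C * exp (- C * u) * (f u - (a + C * I u))"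
      by (simp add: algebra_simps)
    moreover have "C * exp (- C * u) * (f u - (a + C * I u)) \<le> 0"
      using ineq[OF uT] C by (intro mult_nonneg_nonpos) (auto simp: I_def)
    ultimately show "\<exists>y. (G has_real_derivative y) (at u) \<and> y \<le> 0"
      by auto
  qed
  then have "exp (- C * t) * (a + C * I t) \<le> a"
    by (simp add: G_def I_def)
  then have "a + C * I t \<le> a * exp (C * t)"
    by (simp add: exp_minus field_simps)
  then show ?thesis
    using ineq[OF t] by (simp add: I_def)
qed

lemma sum_Basis_inner_mult:
  fixes x y :: "'a::euclidean_space"
  shows "(\<Sum>i\<in>Basis. c * ((x \<bullet> i) * (y \<bullet> i))) = c * (x \<bullet> y)"
  by (simp add: euclidean_inner[of x y] sum_distrib_left)

lemma completing_square_inner: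
  fixes G b :: "'a::real_inner"
  shows "- (\<gamma>\<^sup>2 * (G \<bullet> G) + \<gamma> * \<mu> * (b \<bullet> G)) \<le> \<mu>\<^sup>2 / 4 * (b \<bullet> b)"
proof -
  have "0 \<le> (\<gamma> *\<^sub>R G + (\<mu> / 2) *\<^sub>R b) \<bullet> (\<gamma> *\<^sub>R G + (\<mu> / 2) *\<^sub>R b)"
    by simp
  also have "\<dots> = \<gamma>\<^sup>2 * (G \<bullet> G) + \<gamma> * \<mu> * (b \<bullet> G) + \<mu>\<^sup>2 / 4 * (b \<bullet> b)"
    by (simp add: inner_add_left inner_add_right inner_commute algebra_simps power2_eq_square)
  finally show ?thesis
    by linarith
qed

section \<open>The weighted \<open>L\<^sup>p\<close> energy of a classical solution\<close>

text \<open>A solution for one fixed \<open>\<gamma>\<close>: \<open>mt\<close>, \<open>mx\<close>, \<open>mv\<close>, \<open>mvv\<close> are the derivatives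
  \<open>\<partial>\<^sub>t\<mu>\<close>, \<open>\<nabla>\<^sub>x\<mu>\<close>, \<open>\<nabla>\<^sub>v\<mu>\<close>, \<open>D\<^sub>v\<^sup>2\<mu>\<close> witnessing \<open>regular_VFP_solution\<close>, and \<open>g\<close> is its
  integrable majorant for the exponent \<open>q = p\<close> and the polynomial weight of degree \<open>k = 2\<close>.\<close>
locale VFP_solution =
  fixes \<Phi> :: "'a::euclidean_space \<Rightarrow> real" and gPhi gK :: "'a \<Rightarrow> 'a"
    and cPhi c0 \<gamma> T p :: real
    and m mt :: "real \<Rightarrow> 'a \<Rightarrow> 'a \<Rightarrow> real" and mx mv :: "real \<Rightarrow> 'a \<Rightarrow> 'a \<Rightarrow> 'a"
    and mvv :: "real \<Rightarrow> 'a \<Rightarrow> 'a \<Rightarrow> 'a \<Rightarrow> 'a"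
    and g :: "'a \<times> 'a \<Rightarrow> real"
  assumes p: "2 \<le> p" and T_nonneg: "0 \<le> T"
    and Phi_deriv: "\<And>x. (\<Phi> has_derivative (\<lambda>h. gPhi x \<bullet> h)) (at x)"
    and gPhi_growth: "\<And>x. norm (gPhi x) \<le> cPhi * (1 + norm x)"
    and gPhi_cont: "continuous_on UNIV gPhi"
    and gK_meas: "gK \<in> borel_measurable borel"
    and m_nonneg: "\<And>t x v. t \<in> {0..T} \<Longrightarrow> 0 \<le> m t x v"
    and m_deriv_t: "\<And>t x v. t \<in> {0..T} \<Longrightarrow>
      ((\<lambda>s. m s x v) has_real_derivative mt t x v) (at t within {0..T})"
    and m_deriv_x: "\<And>t x v. t \<in> {0..T} \<Longrightarrow> ((\<lambda>y. m t y v) has_derivative (\<lambda>h. mx t x v \<bullet> h)) (at x)"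
    and m_deriv_v: "\<And>t x v. t \<in> {0..T} \<Longrightarrow> ((\<lambda>w. m t x w) has_derivative (\<lambda>h. mv t x v \<bullet> h)) (at v)"
    and mv_deriv_v: "\<And>t x v. t \<in> {0..T} \<Longrightarrow> ((\<lambda>w. mv t x w) has_derivative mvv t x v) (at v)"
    and m_cont: "continuous_on ({0..T} \<times> UNIV) (\<lambda>(t, x, v). m t x v)"
    and mt_cont: "continuous_on ({0..T} \<times> UNIV) (\<lambda>(t, x, v). mt t x v)"
    and mx_cont: "continuous_on ({0..T} \<times> UNIV) (\<lambda>(t, x, v). mx t x v)"
    and mv_cont: "continuous_on ({0..T} \<times> UNIV) (\<lambda>(t, x, v). mv t x v)"
    and mvv_cont: "\<And>b. continuous_on ({0..T} \<times> UNIV) (\<lambda>(t, x, v). mvv t x v b)"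
    and dominating_integrable: "integrable lborel g"
    and dominating: "\<And>t x v. t \<in> {0..T} \<Longrightarrow> (1 + norm x + norm v) ^ 2 *
      (\<bar>m t x v\<bar> + \<bar>mt t x v\<bar> + norm (mx t x v) + norm (mv t x v) + (\<Sum>b\<in>Basis. norm (mvv t x v b))) powr p
      * exp ((p - 1) * Ham \<Phi> x v) \<le> g (x, v)"
    and VFP_equation: "\<And>t x v. t \<in> {0..T} \<Longrightarrow>
      mt t x v + \<gamma> * (v \<bullet> mx t x v)
      + \<gamma> * ((force gPhi gK (xmarg (m t)) x - \<gamma> *\<^sub>R v) \<bullet> mv t x v - \<gamma> * real DIM('a) * m t x v)
      = \<gamma>\<^sup>2 * (\<Sum>b\<in>Basis. mvv t x v b \<bullet> b)"
    and interaction_bound: "\<And>t. t \<in> {0..T} \<Longrightarrow>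
      AE x in lborel. norm (conv_field gK (xmarg (m t)) x) \<le> c0"
begin

definition weight :: "'a \<Rightarrow> 'a \<Rightarrow> real" where
  "weight x v = exp ((p - 1) * Ham \<Phi> x v)"

definition bracket :: "'a \<Rightarrow> 'a \<Rightarrow> real" where
  "bracket x v = 1 + norm x + norm v"

definition jet :: "real \<Rightarrow> 'a \<Rightarrow> 'a \<Rightarrow> real" where
  "jet t x v = \<bar>m t x v\<bar> + \<bar>mt t x v\<bar> + norm (mx t x v) + norm (mv t x v)
     + (\<Sum>b\<in>Basis. norm (mvv t x v b))"

definition interaction :: "real \<Rightarrow> 'a \<Rightarrow> 'a" where
  "interaction t x = conv_field gK (xmarg (m t)) x"

text \<open>The factor \<open>\<mu>\<^sup>p\<^sup>-\<^sup>2\<close> of the dissipation; \<open>p = 2\<close> is split off because \<open>0 powr 0 = 0\<close>.\<close>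
definition m_powr_pm2 :: "real \<Rightarrow> 'a \<Rightarrow> 'a \<Rightarrow> real" where
  "m_powr_pm2 t x v = (if p = 2 then 1 else m t x v powr (p - 2))"

definition energy :: "real \<Rightarrow> real" where
  "energy t = (\<integral>z. m t (fst z) (snd z) powr p * weight (fst z) (snd z) \<partial>lborel)"

definition energy_deriv :: "real \<Rightarrow> real" where
  "energy_deriv t = (\<integral>z. p * m t (fst z) (snd z) powr (p - 1) * mt t (fst z) (snd z)
     * weight (fst z) (snd z) \<partial>lborel)"

lemma weight_pos: "0 < weight x v"
  by (simp add: weight_def)

lemma bracket_ge_1: "1 \<le> bracket x v"
  by (simp add: bracket_def)

lemma jet_summands_le:
  "\<bar>m t x v\<bar> \<le> jet t x v" "\<bar>mt t x v\<bar> \<le> jet t x v" "norm (mx t x v) \<le> jet t x v"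
  "norm (mv t x v) \<le> jet t x v" "(\<Sum>b\<in>Basis. norm (mvv t x v b)) \<le> jet t x v"
proof -
  have "0 \<le> (\<Sum>b\<in>Basis. norm (mvv t x v b))"
    by (simp add: sum_nonneg)
  then show "\<bar>m t x v\<bar> \<le> jet t x v" "\<bar>mt t x v\<bar> \<le> jet t x v" "norm (mx t x v) \<le> jet t x v"
    "norm (mv t x v) \<le> jet t x v" "(\<Sum>b\<in>Basis. norm (mvv t x v b)) \<le> jet t x v"
    unfolding jet_def using abs_ge_zero[of "m t x v"] abs_ge_zero[of "mt t x v"]
      norm_ge_zero[of "mx t x v"] norm_ge_zero[of "mv t x v"] by linarith+
qed

lemma jet_nonneg: "0 \<le> jet t x v"
  using abs_ge_zero jet_summands_le(1) by (rule order_trans)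

lemma jet_dominated: "t \<in> {0..T} \<Longrightarrow> bracket x v ^ 2 * jet t x v powr p * weight x v \<le> g (x, v)"
  using dominating unfolding bracket_def jet_def weight_def by blast

lemma Phi_cont: "continuous_on UNIV \<Phi>"
  using Phi_deriv by (meson has_derivative_continuous continuous_at_imp_continuous_on)

lemma weight_cont: "continuous_on UNIV (\<lambda>z. weight (fst z) (snd z))"
  unfolding weight_def Ham_def by (intro continuous_intros continuous_on_compose2[OF Phi_cont]) auto

lemma weight_deriv_x:
  "((\<lambda>s. weight (x + s *\<^sub>R i) v) has_real_derivative
     (p - 1) * (gPhi (x + s *\<^sub>R i) \<bullet> i) * weight (x + s *\<^sub>R i) v) (at s)"
proof -
  have "((\<lambda>s. (p - 1) * (\<Phi> (x + s *\<^sub>R i) + (norm v)\<^sup>2 / 2)) has_real_derivative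
      (p - 1) * (gPhi (x + s *\<^sub>R i) \<bullet> i + 0)) (at s)"
    by (intro DERIV_cmult DERIV_add DERIV_const has_real_derivative_along_line Phi_deriv)
  from DERIV_chain2[OF DERIV_exp this] show ?thesis
    unfolding weight_def Ham_def by (simp add: algebra_simps)
qed

lemma weight_deriv_v:
  "((\<lambda>s. weight x (v + s *\<^sub>R i)) has_real_derivative
     (p - 1) * ((v + s *\<^sub>R i) \<bullet> i) * weight x (v + s *\<^sub>R i)) (at s)"
proof -
  have "((\<lambda>u. (norm u)\<^sup>2 / 2) has_derivative (\<lambda>h. (v + s *\<^sub>R i) \<bullet> h)) (at (v + s *\<^sub>R i))"
    unfolding power2_norm_eq_inner by (auto intro!: derivative_eq_intros simp: inner_commute)
  then have "((\<lambda>s. (p - 1) * (\<Phi> x + (norm (v + s *\<^sub>R i))\<^sup>2 / 2)) has_real_derivative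
      (p - 1) * (0 + (v + s *\<^sub>R i) \<bullet> i)) (at s)"
    by (intro DERIV_cmult DERIV_add DERIV_const has_real_derivative_along_line)
  from DERIV_chain2[OF DERIV_exp this] show ?thesis
    unfolding weight_def Ham_def by (simp add: algebra_simps)
qed

lemma gPhi_inner_continuous: "continuous_on UNIV (\<lambda>z::'a \<times> 'a. gPhi (fst z) \<bullet> i)"
  by (intro continuous_intros continuous_on_compose2[OF gPhi_cont]) auto

lemma v_inner_continuous: "continuous_on UNIV (\<lambda>z::'a \<times> 'a. snd z \<bullet> i)"
  by (intro continuous_intros)

lemma cPhi_nonneg: "0 \<le> cPhi"
  using order_trans[OF norm_ge_zero gPhi_growth[of 0]] by simp

lemma p_gt_1: "1 < p"
  using p by simp

definition linear_growth :: "('a \<Rightarrow> 'a \<Rightarrow> real) \<Rightarrow> bool" where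
  "linear_growth a \<longleftrightarrow> (\<lambda>z. a (fst z) (snd z)) \<in> borel_measurable lborel \<and>
     (\<exists>K. AE z in lborel. \<bar>a (fst z) (snd z)\<bar> \<le> K * bracket (fst z) (snd z))"

definition jet_controlled :: "real \<Rightarrow> ('a \<Rightarrow> 'a \<Rightarrow> real) \<Rightarrow> bool" where
  "jet_controlled t U \<longleftrightarrow> continuous_on UNIV (\<lambda>z. U (fst z) (snd z)) \<and>
     (\<forall>x v. \<bar>U x v\<bar> \<le> jet t x v powr p)"

lemma linear_growth_const: "linear_growth (\<lambda>x v. c)"
  unfolding linear_growth_def using bracket_ge_1
  by (intro conjI exI[of _ "\<bar>c\<bar>"] AE_I2 borel_measurable_const) (simp add: mult_le_cancel_left1)

lemma linear_growth_inner_v: "linear_growth (\<lambda>x v. v \<bullet> i)"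
  unfolding linear_growth_def
proof (intro conjI exI[of _ "norm i"] AE_I2)
  show "(\<lambda>z::'a \<times> 'a. snd z \<bullet> i) \<in> borel_measurable lborel"
    by (rule borel_measurable_lborel_continuous_onI[OF v_inner_continuous])
  fix z :: "'a \<times> 'a"
  have "\<bar>snd z \<bullet> i\<bar> \<le> norm i * norm (snd z)"
    using Cauchy_Schwarz_ineq2[of "snd z" i] by (simp add: mult.commute)
  also have "\<dots> \<le> norm i * bracket (fst z) (snd z)"
    by (intro mult_left_mono) (auto simp: bracket_def)
  finally show "\<bar>snd z \<bullet> i\<bar> \<le> norm i * bracket (fst z) (snd z)" .
qed

lemma linear_growth_gPhi: "linear_growth (\<lambda>x v. gPhi x \<bullet> i)"
  unfolding linear_growth_def
proof (intro conjI exI[of _ "cPhi * norm i"] AE_I2)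
  show "(\<lambda>z::'a \<times> 'a. gPhi (fst z) \<bullet> i) \<in> borel_measurable lborel"
    by (rule borel_measurable_lborel_continuous_onI[OF gPhi_inner_continuous])
  fix z :: "'a \<times> 'a"
  have "\<bar>gPhi (fst z) \<bullet> i\<bar> \<le> norm (gPhi (fst z)) * norm i"
    by (rule Cauchy_Schwarz_ineq2)
  also have "\<dots> \<le> cPhi * (1 + norm (fst z)) * norm i"
    by (intro mult_right_mono gPhi_growth) auto
  also have "\<dots> = cPhi * norm i * (1 + norm (fst z))"
    by (simp add: algebra_simps)
  also have "\<dots> \<le> cPhi * norm i * bracket (fst z) (snd z)"
    using cPhi_nonneg by (intro mult_left_mono) (auto simp: bracket_def)
  finally show "\<bar>gPhi (fst z) \<bullet> i\<bar> \<le> cPhi * norm i * bracket (fst z) (snd z)" .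
qed

lemma interaction_measurable:
  assumes "t \<in> {0..T}"
  shows "interaction t \<in> borel_measurable borel"
proof -
  have [measurable]: "gK \<in> borel_measurable borel"
    by (rule gK_meas)
  have "(\<lambda>(y, v). m t y v) \<in> borel_measurable (lborel \<Otimes>\<^sub>M (lborel :: 'a measure))"
    using borel_measurable_continuous_onI[OF continuous_on_slice[OF m_cont assms]]
    by (simp add: lborel_prod case_prod_beta)
  from lborel.borel_measurable_lebesgue_integral[OF this]
  have [measurable]: "xmarg (m t) \<in> borel_measurable borel"
    by (simp add: xmarg_def[abs_def])
  have "(\<lambda>(x, y). xmarg (m t) y *\<^sub>R gK (x - y)) \<in> borel_measurable (lborel \<Otimes>\<^sub>M (lborel :: 'a measure))"
    by measurable
  from lborel.borel_measurable_lebesgue_integral[OF this]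
  have "(\<lambda>x. \<integral>y. xmarg (m t) y *\<^sub>R gK (x - y) \<partial>lborel) \<in> borel_measurable borel"
    by simp
  moreover have "interaction t = (\<lambda>x. \<integral>y. xmarg (m t) y *\<^sub>R gK (x - y) \<partial>lborel)"
    by (simp add: fun_eq_iff interaction_def conv_field_def)
  ultimately show ?thesis
    by simp
qed

lemma linear_growth_interaction:
  assumes "t \<in> {0..T}"
  shows "linear_growth (\<lambda>x v. interaction t x \<bullet> i)"
  unfolding linear_growth_def
proof (intro conjI exI[of _ "\<bar>c0\<bar> * norm i"])
  have [measurable]: "interaction t \<in> borel_measurable borel"
    by (rule interaction_measurable[OF assms])
  have "(\<lambda>z::'a \<times> 'a. interaction t (fst z) \<bullet> i) \<in> borel_measurable (lborel \<Otimes>\<^sub>M lborel)"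
    by measurable
  then show "(\<lambda>z::'a \<times> 'a. interaction t (fst z) \<bullet> i) \<in> borel_measurable lborel"
    by (simp add: lborel_prod)
  show "AE z in lborel. \<bar>interaction t (fst z) \<bullet> i\<bar> \<le> \<bar>c0\<bar> * norm i * bracket (fst z) (snd z)"
    using AE_lborel_fst[OF interaction_bound[OF assms]]
  proof eventually_elim
    case (elim z)
    have "\<bar>interaction t (fst z) \<bullet> i\<bar> \<le> norm (interaction t (fst z)) * norm i"
      by (rule Cauchy_Schwarz_ineq2)
    also have "\<dots> \<le> \<bar>c0\<bar> * norm i"
      using elim by (intro mult_right_mono) (auto simp: interaction_def)
    also have "\<dots> \<le> \<bar>c0\<bar> * norm i * bracket (fst z) (snd z)"
      using mult_left_mono[OF bracket_ge_1[of "fst z" "snd z"], of "\<bar>c0\<bar> * norm i"] by simp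
    finally show ?case .
  qed
qed

text \<open>Every integrand below is a product \<open>U * weight * a * c\<close> of a jet-controlled factor and two
  coefficients of linear growth; the weight \<open>bracket\<^sup>2\<close> in the majorant \<open>g\<close> absorbs both coefficients.\<close>
lemma integrable_jet_controlled:
  assumes t: "t \<in> {0..T}" and U: "jet_controlled t U" and a: "linear_growth a" and c: "linear_growth c"
  shows "integrable lborel (\<lambda>z. U (fst z) (snd z) * weight (fst z) (snd z) * a (fst z) (snd z) * c (fst z) (snd z))"
proof -
  obtain Ka Kc where
    Ka: "AE z in lborel. \<bar>a (fst z) (snd z)\<bar> \<le> Ka * bracket (fst z) (snd z)" and
    Kc: "AE z in lborel. \<bar>c (fst z) (snd z)\<bar> \<le> Kc * bracket (fst z) (snd z)"
    using a c unfolding linear_growth_def by blast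
  have U_meas: "(\<lambda>z. U (fst z) (snd z)) \<in> borel_measurable lborel"
    using U unfolding jet_controlled_def by (blast intro: borel_measurable_lborel_continuous_onI)
  have ac_meas: "(\<lambda>z. a (fst z) (snd z)) \<in> borel_measurable lborel" "(\<lambda>z. c (fst z) (snd z)) \<in> borel_measurable lborel"
    using a c unfolding linear_growth_def by blast+
  show ?thesis
  proof (rule Bochner_Integration.integrable_bound[OF integrable_mult_right[OF dominating_integrable]])
    show "(\<lambda>z. U (fst z) (snd z) * weight (fst z) (snd z) * a (fst z) (snd z) * c (fst z) (snd z))
        \<in> borel_measurable lborel"
      by (intro borel_measurable_times U_meas ac_meas borel_measurable_lborel_continuous_onI[OF weight_cont])
    show "AE z in lborel. norm (U (fst z) (snd z) * weight (fst z) (snd z) * a (fst z) (snd z) * c (fst z) (snd z))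
        \<le> norm (\<bar>Ka\<bar> * \<bar>Kc\<bar> * g z)"
      using Ka Kc
    proof eventually_elim
      case (elim z)
      obtain x v where z: "z = (x, v)"
        by fastforce
      have "\<bar>a x v\<bar> \<le> \<bar>Ka\<bar> * bracket x v" "\<bar>c x v\<bar> \<le> \<bar>Kc\<bar> * bracket x v"
        using elim bracket_ge_1[of x v] z by (auto intro: order_trans mult_right_mono)
      then have "\<bar>U x v * weight x v * a x v * c x v\<bar>
          \<le> jet t x v powr p * weight x v * (\<bar>Ka\<bar> * bracket x v) * (\<bar>Kc\<bar> * bracket x v)"
        using U weight_pos[of x v] bracket_ge_1[of x v] unfolding jet_controlled_def abs_mult
        by (intro mult_mono mult_nonneg_nonneg) auto
      also have "\<dots> = \<bar>Ka\<bar> * \<bar>Kc\<bar> * (bracket x v ^ 2 * jet t x v powr p * weight x v)"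
        by (simp add: power2_eq_square algebra_simps)
      also have "\<dots> \<le> \<bar>Ka\<bar> * \<bar>Kc\<bar> * g (x, v)"
        using jet_dominated[OF t] by (intro mult_left_mono) auto
      finally show ?case
        using z by simp
    qed
  qed
qed

subsection \<open>Integration by parts in phase space\<close>

definition transport_flux :: "real \<Rightarrow> 'a \<Rightarrow> 'a \<Rightarrow> 'a \<Rightarrow> real" where
  "transport_flux t i x v = m t x v powr p * weight x v * (v \<bullet> i)"

definition transport_flux_dx :: "real \<Rightarrow> 'a \<Rightarrow> 'a \<Rightarrow> 'a \<Rightarrow> real" where
  "transport_flux_dx t i x v = p * (m t x v powr (p - 1) * (mx t x v \<bullet> i) * weight x v * (v \<bullet> i))
     + (p - 1) * (m t x v powr p * weight x v * (gPhi x \<bullet> i) * (v \<bullet> i))"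

definition transport_flux_dv :: "real \<Rightarrow> 'a \<Rightarrow> 'a \<Rightarrow> 'a \<Rightarrow> real" where
  "transport_flux_dv t i x v = p * (m t x v powr (p - 1) * (mv t x v \<bullet> i) * weight x v * (v \<bullet> i))
     + (p - 1) * (m t x v powr p * weight x v * (v \<bullet> i) * (v \<bullet> i)) + m t x v powr p * weight x v"

definition force_flux :: "real \<Rightarrow> ('a \<Rightarrow> real) \<Rightarrow> 'a \<Rightarrow> 'a \<Rightarrow> real" where
  "force_flux t \<phi> x v = m t x v powr p * weight x v * \<phi> x"

definition force_flux_dv :: "real \<Rightarrow> 'a \<Rightarrow> ('a \<Rightarrow> real) \<Rightarrow> 'a \<Rightarrow> 'a \<Rightarrow> real" where
  "force_flux_dv t i \<phi> x v = p * (m t x v powr (p - 1) * (mv t x v \<bullet> i) * weight x v * \<phi> x)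
     + (p - 1) * (m t x v powr p * weight x v * \<phi> x * (v \<bullet> i))"

definition diffusion_flux :: "real \<Rightarrow> 'a \<Rightarrow> 'a \<Rightarrow> 'a \<Rightarrow> real" where
  "diffusion_flux t i x v = m t x v powr (p - 1) * (mv t x v \<bullet> i) * weight x v"

definition diffusion_flux_dv :: "real \<Rightarrow> 'a \<Rightarrow> 'a \<Rightarrow> 'a \<Rightarrow> real" where
  "diffusion_flux_dv t i x v = (p - 1) * (m_powr_pm2 t x v * (mv t x v \<bullet> i) * (mv t x v \<bullet> i) * weight x v)
     + (p - 1) * (m t x v powr (p - 1) * (mv t x v \<bullet> i) * weight x v * (v \<bullet> i))
     + m t x v powr (p - 1) * (mvv t x v i \<bullet> i) * weight x v"

text \<open>The interaction flux enters with the factor \<open>p\<close> so that the interaction term left over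
  after the integrations by parts is a multiple of \<open>\<nabla>\<^sub>v\<mu> + \<mu> v\<close>, the quantity controlled by
  the dissipation.\<close>
definition divergence_term :: "real \<Rightarrow> 'a \<Rightarrow> 'a \<Rightarrow> 'a \<Rightarrow> real" where
  "divergence_term t i x v = \<gamma> * force_flux_dv t i (\<lambda>y. gPhi y \<bullet> i) x v - \<gamma> * transport_flux_dx t i x v
     + \<gamma> * p * force_flux_dv t i (\<lambda>y. interaction t y \<bullet> i) x v
     + \<gamma>\<^sup>2 * p * transport_flux_dv t i x v + \<gamma>\<^sup>2 * p * diffusion_flux_dv t i x v"

lemma sum_transport_flux_dx:
  "(\<Sum>i\<in>Basis. transport_flux_dx t i x v) = p * m t x v powr (p - 1) * weight x v * (v \<bullet> mx t x v)
     + (p - 1) * m t x v powr p * weight x v * (gPhi x \<bullet> v)"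
proof -
  have "(\<Sum>i\<in>Basis. transport_flux_dx t i x v) = (\<Sum>i\<in>Basis.
      (p * m t x v powr (p - 1) * weight x v) * ((v \<bullet> i) * (mx t x v \<bullet> i))
      + ((p - 1) * m t x v powr p * weight x v) * ((gPhi x \<bullet> i) * (v \<bullet> i)))"
    by (rule sum.cong) (simp_all add: transport_flux_dx_def algebra_simps)
  then show ?thesis
    by (simp add: sum.distrib sum_Basis_inner_mult)
qed

lemma sum_transport_flux_dv:
  "(\<Sum>i\<in>Basis. transport_flux_dv t i x v) = p * m t x v powr (p - 1) * weight x v * (v \<bullet> mv t x v)
     + (p - 1) * m t x v powr p * weight x v * (v \<bullet> v) + real DIM('a) * m t x v powr p * weight x v"
proof -
  have "(\<Sum>i\<in>Basis. transport_flux_dv t i x v) = (\<Sum>i\<in>Basis.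
      (p * m t x v powr (p - 1) * weight x v) * ((v \<bullet> i) * (mv t x v \<bullet> i))
      + ((p - 1) * m t x v powr p * weight x v) * ((v \<bullet> i) * (v \<bullet> i)) + m t x v powr p * weight x v)"
    by (rule sum.cong) (simp_all add: transport_flux_dv_def algebra_simps)
  then show ?thesis
    by (simp add: sum.distrib sum_Basis_inner_mult)
qed

lemma sum_force_flux_dv:
  "(\<Sum>i\<in>Basis. force_flux_dv t i (\<lambda>y. w y \<bullet> i) x v) = p * m t x v powr (p - 1) * weight x v * (w x \<bullet> mv t x v)
     + (p - 1) * m t x v powr p * weight x v * (w x \<bullet> v)"
proof -
  have "(\<Sum>i\<in>Basis. force_flux_dv t i (\<lambda>y. w y \<bullet> i) x v) = (\<Sum>i\<in>Basis.
      (p * m t x v powr (p - 1) * weight x v) * ((w x \<bullet> i) * (mv t x v \<bullet> i))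
      + ((p - 1) * m t x v powr p * weight x v) * ((w x \<bullet> i) * (v \<bullet> i)))"
    by (rule sum.cong) (simp_all add: force_flux_dv_def algebra_simps)
  then show ?thesis
    by (simp add: sum.distrib sum_Basis_inner_mult)
qed

lemma sum_diffusion_flux_dv:
  "(\<Sum>i\<in>Basis. diffusion_flux_dv t i x v) = (p - 1) * m_powr_pm2 t x v * weight x v * (mv t x v \<bullet> mv t x v)
     + (p - 1) * m t x v powr (p - 1) * weight x v * (v \<bullet> mv t x v)
     + m t x v powr (p - 1) * weight x v * (\<Sum>i\<in>Basis. mvv t x v i \<bullet> i)"
proof -
  have "(\<Sum>i\<in>Basis. diffusion_flux_dv t i x v) = (\<Sum>i\<in>Basis.
      ((p - 1) * m_powr_pm2 t x v * weight x v) * ((mv t x v \<bullet> i) * (mv t x v \<bullet> i))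
      + ((p - 1) * m t x v powr (p - 1) * weight x v) * ((v \<bullet> i) * (mv t x v \<bullet> i))
      + (m t x v powr (p - 1) * weight x v) * (mvv t x v i \<bullet> i))"
    by (rule sum.cong) (simp_all add: diffusion_flux_dv_def algebra_simps)
  then show ?thesis
    by (simp add: sum.distrib sum_Basis_inner_mult sum_distrib_left)
qed

context
  fixes t :: real
  assumes t: "t \<in> {0..T}"
begin

lemma m_ge_0: "0 \<le> m t x v"
  using m_nonneg[OF t] .

lemma m_continuous: "continuous_on UNIV (\<lambda>z. m t (fst z) (snd z))"
  by (rule continuous_on_slice[OF m_cont t])

lemma mt_continuous: "continuous_on UNIV (\<lambda>z. mt t (fst z) (snd z))"
  by (rule continuous_on_slice[OF mt_cont t])

lemma mx_inner_continuous: "continuous_on UNIV (\<lambda>z. mx t (fst z) (snd z) \<bullet> i)"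
  using continuous_on_slice[OF mx_cont t] by (auto intro!: continuous_intros)

lemma mv_inner_continuous: "continuous_on UNIV (\<lambda>z. mv t (fst z) (snd z) \<bullet> i)"
  using continuous_on_slice[OF mv_cont t] by (auto intro!: continuous_intros)

lemma mvv_inner_continuous: "continuous_on UNIV (\<lambda>z. mvv t (fst z) (snd z) i \<bullet> j)"
  using continuous_on_slice[OF mvv_cont t] by (auto intro!: continuous_intros)

lemma m_powr_continuous: "0 < q \<Longrightarrow> continuous_on UNIV (\<lambda>z. m t (fst z) (snd z) powr q)"
  by (rule continuous_on_powr'[OF m_continuous continuous_on_const]) (auto simp: m_ge_0)

lemma m_powr_p_continuous: "continuous_on UNIV (\<lambda>z. m t (fst z) (snd z) powr p)"
  using m_powr_continuous p by simp

lemma m_powr_pm1_continuous: "continuous_on UNIV (\<lambda>z. m t (fst z) (snd z) powr (p - 1))"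
  using m_powr_continuous p by simp

lemma m_powr_pm2_continuous: "continuous_on UNIV (\<lambda>z. m_powr_pm2 t (fst z) (snd z))"
  unfolding m_powr_pm2_def
proof (cases "p = 2")
  case False
  then show "continuous_on UNIV (\<lambda>z. if p = 2 then 1 else m t (fst z) (snd z) powr (p - 2))"
    using m_powr_continuous[of "p - 2"] p by simp
qed simp

lemmas flux_continuity = m_powr_p_continuous m_powr_pm1_continuous m_powr_pm2_continuous
  mx_inner_continuous mv_inner_continuous mvv_inner_continuous weight_cont v_inner_continuous

lemma m_le_jet: "m t x v \<le> jet t x v"
  using jet_summands_le(1) by (rule order_trans[OF abs_ge_self])

lemma mx_inner_le_jet: "i \<in> Basis \<Longrightarrow> \<bar>mx t x v \<bullet> i\<bar> \<le> jet t x v"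
  using Basis_le_norm jet_summands_le(3) by (rule order_trans)

lemma mv_inner_le_jet: "i \<in> Basis \<Longrightarrow> \<bar>mv t x v \<bullet> i\<bar> \<le> jet t x v"
  using Basis_le_norm jet_summands_le(4) by (rule order_trans)

lemma mvv_inner_le_jet: "i \<in> Basis \<Longrightarrow> \<bar>mvv t x v i \<bullet> i\<bar> \<le> jet t x v"
proof -
  assume i: "i \<in> Basis"
  have "\<bar>mvv t x v i \<bullet> i\<bar> \<le> norm (mvv t x v i)"
    using Basis_le_norm[OF i] .
  also have "\<dots> \<le> (\<Sum>b\<in>Basis. norm (mvv t x v b))"
    by (rule member_le_sum) (use i in auto)
  also have "\<dots> \<le> jet t x v"
    by (rule jet_summands_le(5))
  finally show ?thesis .
qed

lemma jet_controlled_m_powr: "jet_controlled t (\<lambda>x v. m t x v powr p)"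
  unfolding jet_controlled_def using m_powr_continuous[of p] p m_ge_0 m_le_jet
  by (auto intro: powr_mono2)

lemma jet_controlled_m_powr_mult:
  assumes "continuous_on UNIV (\<lambda>z. X (fst z) (snd z))" and X: "\<And>x v. \<bar>X x v\<bar> \<le> jet t x v"
  shows "jet_controlled t (\<lambda>x v. m t x v powr (p - 1) * X x v)"
  unfolding jet_controlled_def
proof (intro conjI allI)
  show "continuous_on UNIV (\<lambda>z. m t (fst z) (snd z) powr (p - 1) * X (fst z) (snd z))"
    using assms(1) m_powr_continuous[of "p - 1"] p by (auto intro: continuous_on_mult)
  fix x v
  have "m t x v powr (p - 1) \<le> jet t x v powr (p - 1)"
    by (rule powr_mono2) (use p m_ge_0 m_le_jet in auto)
  then have "\<bar>m t x v powr (p - 1) * X x v\<bar> \<le> jet t x v powr (p - 1) * jet t x v"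
    unfolding abs_mult using X by (intro mult_mono) auto
  also have "\<dots> = jet t x v powr p"
    using X[of x v] by (cases "jet t x v = 0") (auto simp: powr_diff)
  finally show "\<bar>m t x v powr (p - 1) * X x v\<bar> \<le> jet t x v powr p" .
qed

lemma jet_controlled_m_powr_pm2_mult:
  assumes "continuous_on UNIV (\<lambda>z. X (fst z) (snd z))" and X: "\<And>x v. \<bar>X x v\<bar> \<le> jet t x v"
  shows "jet_controlled t (\<lambda>x v. m_powr_pm2 t x v * X x v * X x v)"
  unfolding jet_controlled_def
proof (intro conjI allI)
  show "continuous_on UNIV (\<lambda>z. m_powr_pm2 t (fst z) (snd z) * X (fst z) (snd z) * X (fst z) (snd z))"
    using assms(1) m_powr_pm2_continuous by (auto intro: continuous_on_mult)
  fix x v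
  have R: "0 \<le> m_powr_pm2 t x v" "m_powr_pm2 t x v \<le> (if p = 2 then 1 else jet t x v powr (p - 2))"
    unfolding m_powr_pm2_def using m_ge_0 m_le_jet p by (auto intro: powr_mono2)
  have "\<bar>m_powr_pm2 t x v * X x v * X x v\<bar> \<le> (if p = 2 then 1 else jet t x v powr (p - 2)) * jet t x v * jet t x v"
    unfolding abs_mult using R X jet_nonneg by (intro mult_mono) auto
  also have "\<dots> = jet t x v powr p"
    using X[of x v] by (cases "jet t x v = 0") (auto simp: powr_diff power2_eq_square)
  finally show "\<bar>m_powr_pm2 t x v * X x v * X x v\<bar> \<le> jet t x v powr p" .
qed

lemma m_powr_deriv_x:
  "((\<lambda>s. m t (x + s *\<^sub>R i) v powr p) has_real_derivative
     p * m t (x + s *\<^sub>R i) v powr (p - 1) * (mx t (x + s *\<^sub>R i) v \<bullet> i)) (at s)"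
  by (rule has_real_derivative_powr_nonneg[where S=UNIV, simplified])
    (use has_real_derivative_along_line[OF m_deriv_x[OF t]] m_ge_0 p_gt_1 in auto)

lemma m_powr_deriv_v:
  "((\<lambda>s. m t x (v + s *\<^sub>R i) powr q) has_real_derivative
     q * m t x (v + s *\<^sub>R i) powr (q - 1) * (mv t x (v + s *\<^sub>R i) \<bullet> i)) (at s)" if "1 < q"
  by (rule has_real_derivative_powr_nonneg[where S=UNIV, simplified])
    (use has_real_derivative_along_line[OF m_deriv_v[OF t]] m_ge_0 that in auto)

lemma m_powr_pm1_deriv_v:
  "((\<lambda>s. m t x (v + s *\<^sub>R i) powr (p - 1)) has_real_derivative
     (p - 1) * m_powr_pm2 t x (v + s *\<^sub>R i) * (mv t x (v + s *\<^sub>R i) \<bullet> i)) (at s)"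
proof (cases "p = 2")
  case True
  have "((\<lambda>s. m t x (v + s *\<^sub>R i)) has_real_derivative mv t x (v + s *\<^sub>R i) \<bullet> i) (at s)"
    by (rule has_real_derivative_along_line[OF m_deriv_v[OF t]])
  then show ?thesis
    unfolding m_powr_pm2_def using True m_ge_0 by simp
next
  case False
  then show ?thesis
    unfolding m_powr_pm2_def using m_powr_deriv_v[of "p - 1"] p by (simp add: diff_diff_eq)
qed

lemma mv_inner_deriv_v:
  "((\<lambda>s. mv t x (v + s *\<^sub>R i) \<bullet> i) has_real_derivative mvv t x (v + s *\<^sub>R i) i \<bullet> i) (at s)"
  by (rule has_real_derivative_along_line_inner[OF mv_deriv_v[OF t]])

lemma transport_flux_deriv_x:
  "((\<lambda>s. transport_flux t i (x + s *\<^sub>R i) v) has_real_derivative transport_flux_dx t i (x + s *\<^sub>R i) v) (at s)"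
  unfolding transport_flux_def transport_flux_dx_def
  by (rule DERIV_cong[OF DERIV_mult[OF DERIV_mult[OF m_powr_deriv_x weight_deriv_x] DERIV_const]])
    (simp add: algebra_simps)

lemma transport_flux_deriv_v:
  assumes "i \<in> Basis"
  shows "((\<lambda>s. transport_flux t i x (v + s *\<^sub>R i)) has_real_derivative transport_flux_dv t i x (v + s *\<^sub>R i)) (at s)"
proof -
  have "((\<lambda>u. u \<bullet> i) has_derivative (\<lambda>h. i \<bullet> h)) (at (v + s *\<^sub>R i))"
    by (auto intro!: derivative_eq_intros simp: inner_commute)
  from has_real_derivative_along_line[OF this]
  have "((\<lambda>s. (v + s *\<^sub>R i) \<bullet> i) has_real_derivative 1) (at s)"
    using assms by simp
  from DERIV_mult[OF DERIV_mult[OF m_powr_deriv_v[OF p_gt_1] weight_deriv_v] this] show ?thesis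
    unfolding transport_flux_def transport_flux_dv_def by (rule DERIV_cong) (simp add: algebra_simps)
qed

lemma force_flux_deriv_v:
  "((\<lambda>s. force_flux t \<phi> x (v + s *\<^sub>R i)) has_real_derivative force_flux_dv t i \<phi> x (v + s *\<^sub>R i)) (at s)"
  unfolding force_flux_def force_flux_dv_def
  by (rule DERIV_cong[OF DERIV_mult[OF DERIV_mult[OF m_powr_deriv_v[OF p_gt_1] weight_deriv_v] DERIV_const]])
    (simp add: algebra_simps)

lemma diffusion_flux_deriv_v:
  "((\<lambda>s. diffusion_flux t i x (v + s *\<^sub>R i)) has_real_derivative diffusion_flux_dv t i x (v + s *\<^sub>R i)) (at s)"
  unfolding diffusion_flux_def diffusion_flux_dv_def
  by (rule DERIV_cong[OF DERIV_mult[OF DERIV_mult[OF m_powr_pm1_deriv_v mv_inner_deriv_v] weight_deriv_v]])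
    (simp add: algebra_simps)



lemma m_powr_split: "m t x v powr (p - 1) = m_powr_pm2 t x v * m t x v"
  "m t x v powr p = m_powr_pm2 t x v * m t x v * m t x v"
  using m_ge_0[of x v] p
  by (cases "m t x v = 0"; simp add: m_powr_pm2_def powr_diff power2_eq_square field_simps)+

lemma integrable_energy_integrand:
  "integrable lborel (\<lambda>z. m t (fst z) (snd z) powr p * weight (fst z) (snd z))"
  using integrable_jet_controlled[OF t jet_controlled_m_powr linear_growth_const[of 1] linear_growth_const[of 1]]
  by simp

lemma jet_controlled_m_powr_mt: "jet_controlled t (\<lambda>x v. m t x v powr (p - 1) * mt t x v)"
  by (rule jet_controlled_m_powr_mult[OF mt_continuous jet_summands_le(2)])

lemma integrable_energy_deriv_integrand:
  "integrable lborel (\<lambda>z. p * m t (fst z) (snd z) powr (p - 1) * mt t (fst z) (snd z) * weight (fst z) (snd z))"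
  using integrable_mult_right[OF integrable_jet_controlled[OF t jet_controlled_m_powr_mt
        linear_growth_const[of 1] linear_growth_const[of 1]], of p]
  by (simp add: mult.assoc)

context
  fixes i :: 'a
  assumes i: "i \<in> Basis"
begin

lemma jet_controlled_m_powr_mx: "jet_controlled t (\<lambda>x v. m t x v powr (p - 1) * (mx t x v \<bullet> i))"
  by (rule jet_controlled_m_powr_mult[OF mx_inner_continuous mx_inner_le_jet[OF i]])

lemma jet_controlled_m_powr_mv: "jet_controlled t (\<lambda>x v. m t x v powr (p - 1) * (mv t x v \<bullet> i))"
  by (rule jet_controlled_m_powr_mult[OF mv_inner_continuous mv_inner_le_jet[OF i]])

lemma jet_controlled_m_powr_mvv: "jet_controlled t (\<lambda>x v. m t x v powr (p - 1) * (mvv t x v i \<bullet> i))"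
  by (rule jet_controlled_m_powr_mult[OF mvv_inner_continuous mvv_inner_le_jet[OF i]])

lemma jet_controlled_m_powr_pm2_mv:
  "jet_controlled t (\<lambda>x v. m_powr_pm2 t x v * (mv t x v \<bullet> i) * (mv t x v \<bullet> i))"
  by (rule jet_controlled_m_powr_pm2_mult[OF mv_inner_continuous mv_inner_le_jet[OF i]])

lemma integrable_transport_flux: "integrable lborel (\<lambda>z. transport_flux t i (fst z) (snd z))"
  using integrable_jet_controlled[OF t jet_controlled_m_powr linear_growth_inner_v[of i] linear_growth_const[of 1]]
  by (simp add: transport_flux_def)

lemma integrable_transport_flux_dx: "integrable lborel (\<lambda>z. transport_flux_dx t i (fst z) (snd z))"
  using integrable_jet_controlled[OF t jet_controlled_m_powr_mx linear_growth_inner_v[of i] linear_growth_const[of 1]]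
    integrable_jet_controlled[OF t jet_controlled_m_powr linear_growth_gPhi[of i] linear_growth_inner_v[of i]]
  unfolding transport_flux_dx_def
  by (intro Bochner_Integration.integrable_add Bochner_Integration.integrable_mult_right) simp_all

lemma integrable_transport_flux_dv: "integrable lborel (\<lambda>z. transport_flux_dv t i (fst z) (snd z))"
  using integrable_jet_controlled[OF t jet_controlled_m_powr_mv linear_growth_inner_v[of i] linear_growth_const[of 1]]
    integrable_jet_controlled[OF t jet_controlled_m_powr linear_growth_inner_v[of i] linear_growth_inner_v[of i]]
    integrable_energy_integrand
  unfolding transport_flux_dv_def
  by (intro Bochner_Integration.integrable_add Bochner_Integration.integrable_mult_right) simp_all

lemma integrable_force_flux:
  "linear_growth (\<lambda>x v. \<phi> x) \<Longrightarrow> integrable lborel (\<lambda>z. force_flux t \<phi> (fst z) (snd z))"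
  using integrable_jet_controlled[OF t jet_controlled_m_powr _ linear_growth_const[of 1]]
  by (simp add: force_flux_def)

lemma integrable_force_flux_dv:
  assumes "linear_growth (\<lambda>x v. \<phi> x)"
  shows "integrable lborel (\<lambda>z. force_flux_dv t i \<phi> (fst z) (snd z))"
  using integrable_jet_controlled[OF t jet_controlled_m_powr_mv assms linear_growth_const[of 1]]
    integrable_jet_controlled[OF t jet_controlled_m_powr assms linear_growth_inner_v[of i]]
  unfolding force_flux_dv_def
  by (intro Bochner_Integration.integrable_add Bochner_Integration.integrable_mult_right) simp_all

lemma integrable_diffusion_flux: "integrable lborel (\<lambda>z. diffusion_flux t i (fst z) (snd z))"
  using integrable_jet_controlled[OF t jet_controlled_m_powr_mv linear_growth_const[of 1] linear_growth_const[of 1]]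
  by (simp add: diffusion_flux_def)

lemma integrable_diffusion_flux_dv: "integrable lborel (\<lambda>z. diffusion_flux_dv t i (fst z) (snd z))"
  using integrable_jet_controlled[OF t jet_controlled_m_powr_pm2_mv linear_growth_const[of 1] linear_growth_const[of 1]]
    integrable_jet_controlled[OF t jet_controlled_m_powr_mv linear_growth_inner_v[of i] linear_growth_const[of 1]]
    integrable_jet_controlled[OF t jet_controlled_m_powr_mvv linear_growth_const[of 1] linear_growth_const[of 1]]
  unfolding diffusion_flux_dv_def
  by (intro Bochner_Integration.integrable_add Bochner_Integration.integrable_mult_right) simp_all

lemma integral_transport_flux_dx: "(\<integral>z. transport_flux_dx t i (fst z) (snd z) \<partial>lborel) = 0"
proof (rule integral_partial_derivative_eq_0[where F="transport_flux t i" and i=i and j=0])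
  have "continuous_on UNIV (\<lambda>z. transport_flux_dx t i (fst z) (snd z))"
    unfolding transport_flux_dx_def
    by (intro continuous_on_add continuous_on_mult continuous_on_const flux_continuity gPhi_inner_continuous)
  from continuous_on_along_line[OF this, of _ i _ 0]
  show "continuous_on UNIV (\<lambda>s. transport_flux_dx t i (x + s *\<^sub>R i) (v + s *\<^sub>R 0))" for x v
    by simp
qed (simp_all add: integrable_transport_flux integrable_transport_flux_dx transport_flux_deriv_x)

lemma integral_transport_flux_dv: "(\<integral>z. transport_flux_dv t i (fst z) (snd z) \<partial>lborel) = 0"
proof (rule integral_partial_derivative_eq_0[where F="transport_flux t i" and i=0 and j=i])
  have "continuous_on UNIV (\<lambda>z. transport_flux_dv t i (fst z) (snd z))"
    unfolding transport_flux_dv_def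
    by (intro continuous_on_add continuous_on_mult continuous_on_const flux_continuity)
  from continuous_on_along_line[OF this, of _ 0 _ i]
  show "continuous_on UNIV (\<lambda>s. transport_flux_dv t i (x + s *\<^sub>R 0) (v + s *\<^sub>R i))" for x v
    by simp
qed (simp_all add: integrable_transport_flux integrable_transport_flux_dv transport_flux_deriv_v[OF i])

text \<open>No regularity of \<open>\<phi>\<close> is needed: along lines in \<open>v\<close> the factor \<open>\<phi> x\<close> is constant.\<close>
lemma integral_force_flux_dv:
  assumes "linear_growth (\<lambda>x v. \<phi> x)"
  shows "(\<integral>z. force_flux_dv t i \<phi> (fst z) (snd z) \<partial>lborel) = 0"
proof (rule integral_partial_derivative_eq_0[where F="force_flux t \<phi>" and i=0 and j=i])
  fix x v
  have "continuous_on UNIV (\<lambda>z. force_flux_dv t i (\<lambda>_. \<phi> x) (fst z) (snd z))"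
    unfolding force_flux_dv_def
    by (intro continuous_on_add continuous_on_mult continuous_on_const flux_continuity)
  from continuous_on_along_line[OF this, of x 0 v i]
  show "continuous_on UNIV (\<lambda>s. force_flux_dv t i \<phi> (x + s *\<^sub>R 0) (v + s *\<^sub>R i))"
    by (simp add: force_flux_dv_def)
qed (simp_all add: integrable_force_flux[OF assms] integrable_force_flux_dv[OF assms] force_flux_deriv_v)

lemma integral_diffusion_flux_dv: "(\<integral>z. diffusion_flux_dv t i (fst z) (snd z) \<partial>lborel) = 0"
proof (rule integral_partial_derivative_eq_0[where F="diffusion_flux t i" and i=0 and j=i])
  have "continuous_on UNIV (\<lambda>z. diffusion_flux_dv t i (fst z) (snd z))"
    unfolding diffusion_flux_dv_def
    by (intro continuous_on_add continuous_on_mult continuous_on_const flux_continuity)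
  from continuous_on_along_line[OF this, of _ 0 _ i]
  show "continuous_on UNIV (\<lambda>s. diffusion_flux_dv t i (x + s *\<^sub>R 0) (v + s *\<^sub>R i))" for x v
    by simp
qed (simp_all add: integrable_diffusion_flux integrable_diffusion_flux_dv diffusion_flux_deriv_v)

lemma divergence_term_integrable: "integrable lborel (\<lambda>z. divergence_term t i (fst z) (snd z))"
  unfolding divergence_term_def
  by (intro Bochner_Integration.integrable_add Bochner_Integration.integrable_diff
      Bochner_Integration.integrable_mult_right integrable_transport_flux_dx integrable_transport_flux_dv
      integrable_force_flux_dv linear_growth_gPhi linear_growth_interaction[OF t] integrable_diffusion_flux_dv)

lemma divergence_term_integral: "(\<integral>z. divergence_term t i (fst z) (snd z) \<partial>lborel) = 0"
  unfolding divergence_term_def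
  by (simp add: integrable_transport_flux_dx integrable_transport_flux_dv integrable_diffusion_flux_dv
      integrable_force_flux_dv linear_growth_gPhi linear_growth_interaction[OF t]
      integral_transport_flux_dx integral_transport_flux_dv integral_diffusion_flux_dv
      integral_force_flux_dv)

end

lemma divergence_terms_integrable:
  "integrable lborel (\<lambda>z. \<Sum>i\<in>Basis. divergence_term t i (fst z) (snd z))"
  by (intro Bochner_Integration.integrable_sum divergence_term_integrable)

lemma divergence_terms_integral: "(\<integral>z. (\<Sum>i\<in>Basis. divergence_term t i (fst z) (snd z)) \<partial>lborel) = 0"
  by (simp add: Bochner_Integration.integral_sum divergence_term_integrable divergence_term_integral)

lemma energy_integrand_minus_divergence:
  fixes x v :: 'a
  defines "G \<equiv> mv t x v + m t x v *\<^sub>R v"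
  shows "p * m t x v powr (p - 1) * mt t x v * weight x v - (\<Sum>i\<in>Basis. divergence_term t i x v)
    = - p * (p - 1) * weight x v * m_powr_pm2 t x v
        * (\<gamma>\<^sup>2 * (G \<bullet> G) + \<gamma> * m t x v * (interaction t x \<bullet> G))"
proof -
  define \<mu> R W MV b where "\<mu> = m t x v" and "R = m_powr_pm2 t x v" and "W = weight x v"
    and "MV = mv t x v" and "b = interaction t x"
  have mt: "mt t x v = \<gamma>\<^sup>2 * (\<Sum>i\<in>Basis. mvv t x v i \<bullet> i) - \<gamma> * (v \<bullet> mx t x v)
      + \<gamma> * (gPhi x \<bullet> MV) + \<gamma> * (b \<bullet> MV) + \<gamma>\<^sup>2 * (v \<bullet> MV) + \<gamma>\<^sup>2 * real DIM('a) * \<mu>"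
    using VFP_equation[OF t, of x v]
    by (simp add: force_def interaction_def inner_diff_left inner_add_left MV_def b_def \<mu>_def
        power2_eq_square algebra_simps)
  have "(\<Sum>i\<in>Basis. divergence_term t i x v) = \<gamma> * (\<Sum>i\<in>Basis. force_flux_dv t i (\<lambda>y. gPhi y \<bullet> i) x v)
      - \<gamma> * (\<Sum>i\<in>Basis. transport_flux_dx t i x v)
      + \<gamma> * p * (\<Sum>i\<in>Basis. force_flux_dv t i (\<lambda>y. interaction t y \<bullet> i) x v)
      + \<gamma>\<^sup>2 * p * (\<Sum>i\<in>Basis. transport_flux_dv t i x v) + \<gamma>\<^sup>2 * p * (\<Sum>i\<in>Basis. diffusion_flux_dv t i x v)"
    by (simp add: divergence_term_def sum.distrib sum_subtractf sum_distrib_left)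
  also have "\<dots> = \<gamma> * (p * (R * \<mu>) * W * (gPhi x \<bullet> MV) + (p - 1) * (R * \<mu> * \<mu>) * W * (gPhi x \<bullet> v))
      - \<gamma> * (p * (R * \<mu>) * W * (v \<bullet> mx t x v) + (p - 1) * (R * \<mu> * \<mu>) * W * (gPhi x \<bullet> v))
      + \<gamma> * p * (p * (R * \<mu>) * W * (b \<bullet> MV) + (p - 1) * (R * \<mu> * \<mu>) * W * (b \<bullet> v))
      + \<gamma>\<^sup>2 * p * (p * (R * \<mu>) * W * (v \<bullet> MV) + (p - 1) * (R * \<mu> * \<mu>) * W * (v \<bullet> v)
          + real DIM('a) * (R * \<mu> * \<mu>) * W)
      + \<gamma>\<^sup>2 * p * ((p - 1) * R * W * (MV \<bullet> MV) + (p - 1) * (R * \<mu>) * W * (v \<bullet> MV)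
          + (R * \<mu>) * W * (\<Sum>i\<in>Basis. mvv t x v i \<bullet> i))"
    unfolding sum_force_flux_dv sum_transport_flux_dx sum_transport_flux_dv sum_diffusion_flux_dv m_powr_split
    by (simp add: \<mu>_def R_def W_def MV_def b_def)
  finally have div: "(\<Sum>i\<in>Basis. divergence_term t i x v) = \<dots>" .
  have GG: "G \<bullet> G = MV \<bullet> MV + 2 * \<mu> * (v \<bullet> MV) + \<mu> * \<mu> * (v \<bullet> v)"
    by (simp add: G_def MV_def \<mu>_def inner_add_left inner_add_right inner_commute algebra_simps)
  have bG: "interaction t x \<bullet> G = b \<bullet> MV + \<mu> * (b \<bullet> v)"
    by (simp add: G_def MV_def \<mu>_def b_def inner_add_right)
  have Q: "m t x v powr (p - 1) = R * \<mu>"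
    by (simp add: m_powr_split(1) R_def \<mu>_def)
  \<comment> \<open>after substituting the equation the Laplacian, transport, confinement and \<open>d \<mu>\<close> terms cancel\<close>
  show ?thesis
    unfolding div mt GG bG Q
    unfolding W_def[symmetric] R_def[symmetric] \<mu>_def[symmetric]
    by algebra
qed

lemma energy_integrand_le:
  "p * m t x v powr (p - 1) * mt t x v * weight x v - (\<Sum>i\<in>Basis. divergence_term t i x v)
    \<le> p * (p - 1) / 4 * (norm (interaction t x))\<^sup>2 * (m t x v powr p * weight x v)"
proof -
  define G where "G = mv t x v + m t x v *\<^sub>R v"
  define c where "c = p * (p - 1) * weight x v * m_powr_pm2 t x v"
  have "0 \<le> c"
    using p m_ge_0[of x v] weight_pos[of x v] by (simp add: c_def m_powr_pm2_def)
  have "p * m t x v powr (p - 1) * mt t x v * weight x v - (\<Sum>i\<in>Basis. divergence_term t i x v)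
      = c * - (\<gamma>\<^sup>2 * (G \<bullet> G) + \<gamma> * m t x v * (interaction t x \<bullet> G))"
    unfolding energy_integrand_minus_divergence[of x v, folded G_def] c_def by algebra
  also have "\<dots> \<le> c * ((m t x v)\<^sup>2 / 4 * (interaction t x \<bullet> interaction t x))"
    using completing_square_inner \<open>0 \<le> c\<close> by (rule mult_left_mono)
  also have "\<dots> = p * (p - 1) / 4 * (norm (interaction t x))\<^sup>2 * (m t x v powr p * weight x v)"
    unfolding c_def m_powr_split(2) power2_norm_eq_inner by (simp add: power2_eq_square field_simps)
  finally show ?thesis .
qed

lemma energy_deriv_le: "energy_deriv t \<le> p * (p - 1) / 4 * c0\<^sup>2 * energy t"
proof -
  let ?I = "\<lambda>z. p * m t (fst z) (snd z) powr (p - 1) * mt t (fst z) (snd z) * weight (fst z) (snd z)"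
  let ?S = "\<lambda>z. \<Sum>i\<in>Basis. divergence_term t i (fst z) (snd z)"
  let ?P = "\<lambda>z. m t (fst z) (snd z) powr p * weight (fst z) (snd z)"
  have "energy_deriv t = (\<integral>z. ?I z - ?S z \<partial>lborel)"
    using integrable_energy_deriv_integrand divergence_terms_integrable divergence_terms_integral
    by (simp add: energy_deriv_def)
  also have "\<dots> \<le> (\<integral>z. p * (p - 1) / 4 * c0\<^sup>2 * ?P z \<partial>lborel)"
  proof (rule integral_mono_AE)
    show "integrable lborel (\<lambda>z. ?I z - ?S z)"
      using integrable_energy_deriv_integrand divergence_terms_integrable by simp
    show "integrable lborel (\<lambda>z. p * (p - 1) / 4 * c0\<^sup>2 * ?P z)"
      using integrable_energy_integrand by simp
    show "AE z in lborel. ?I z - ?S z \<le> p * (p - 1) / 4 * c0\<^sup>2 * ?P z"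
      using AE_lborel_fst[OF interaction_bound[OF t]]
    proof eventually_elim
      case (elim z)
      have "(norm (interaction t (fst z)))\<^sup>2 \<le> c0\<^sup>2"
        using elim by (simp add: interaction_def power_mono)
      then have "p * (p - 1) / 4 * (norm (interaction t (fst z)))\<^sup>2 * ?P z \<le> p * (p - 1) / 4 * c0\<^sup>2 * ?P z"
        using p weight_pos[of "fst z" "snd z"] by (intro mult_right_mono mult_left_mono) auto
      with energy_integrand_le[of "fst z" "snd z"] show ?case
        by linarith
    qed
  qed
  also have "\<dots> = p * (p - 1) / 4 * c0\<^sup>2 * energy t"
    by (simp add: energy_def)
  finally show ?thesis .
qed

end


subsection \<open>Time evolution of the energy\<close>

lemma energy_nonneg: "0 \<le> energy t"
  unfolding energy_def using weight_pos by (intro Bochner_Integration.integral_nonneg) (simp add: less_imp_le)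

lemma energy_deriv_integrand_bound:
  assumes s: "s \<in> {0..T}"
  shows "\<bar>p * m s x v powr (p - 1) * mt s x v * weight x v\<bar> \<le> p * g (x, v)"
proof -
  have mt: "\<bar>m s x v powr (p - 1) * mt s x v\<bar> \<le> jet s x v powr p"
    using jet_controlled_m_powr_mt[OF s] unfolding jet_controlled_def by blast
  have "\<bar>m s x v powr (p - 1) * mt s x v\<bar> * weight x v \<le> jet s x v powr p * weight x v"
    using mt weight_pos[of x v] by (intro mult_right_mono) auto
  also have "\<dots> \<le> bracket x v ^ 2 * (jet s x v powr p * weight x v)"
    using bracket_ge_1[of x v] weight_pos[of x v] mult_right_mono[of 1 "bracket x v ^ 2" "jet s x v powr p * weight x v"]
    by (simp add: one_le_power)
  also have "\<dots> \<le> g (x, v)"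
    using jet_dominated[OF s, of x v] by (simp add: mult.assoc)
  finally show ?thesis
    using p weight_pos[of x v] by (simp add: abs_mult mult.assoc)
qed

lemma energy_deriv_has_integral:
  assumes t: "t \<in> {0..T}"
  shows "(energy_deriv has_integral energy t - energy 0) {0..t}"
proof -
  have sub: "{0..t} \<subseteq> {0..T}"
    using t by auto
  define F where "F = (\<lambda>s z. m s (fst z) (snd z) powr p * weight (fst z) (snd z))"
  define G where "G = (\<lambda>s z. p * m s (fst z) (snd z) powr (p - 1) * mt s (fst z) (snd z) * weight (fst z) (snd z))"
  have "continuous_on ({0..T} \<times> UNIV) (\<lambda>y. G (fst y) (snd y))"
  proof -
    have "continuous_on ({0..T} \<times> UNIV) (\<lambda>y. m (fst y) (fst (snd y)) (snd (snd y)) powr (p - 1))"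
      using m_cont by (intro continuous_on_powr' continuous_on_const) (auto simp: case_prod_beta m_nonneg p_gt_1)
    moreover have "continuous_on ({0..T} \<times> UNIV) (\<lambda>y. mt (fst y) (fst (snd y)) (snd (snd y)))"
      using mt_cont by (simp add: case_prod_beta)
    moreover have "continuous_on ({0..T} \<times> UNIV) (\<lambda>y::real \<times> 'a \<times> 'a. weight (fst (snd y)) (snd (snd y)))"
      by (rule continuous_on_compose2[OF weight_cont, where f=snd]) (auto intro!: continuous_intros)
    ultimately show ?thesis
      unfolding G_def by (intro continuous_on_mult continuous_on_const)
  qed
  then have "continuous_on ({0..t} \<times> UNIV) (\<lambda>y. G (fst y) (snd y))"
    by (rule continuous_on_subset) (use sub in auto)
  moreover have "((\<lambda>s. F s z) has_real_derivative G s z) (at s within {0..t})" if "s \<in> {0..t}" for s z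
  proof -
    have sT: "s \<in> {0..T}"
      using that sub by auto
    have "((\<lambda>s. m s (fst z) (snd z) powr p) has_real_derivative
        p * m s (fst z) (snd z) powr (p - 1) * mt s (fst z) (snd z)) (at s within {0..T})"
      by (rule has_real_derivative_powr_nonneg[OF m_deriv_t[OF sT]]) (use m_nonneg p_gt_1 sT in auto)
    from DERIV_mult[OF DERIV_subset[OF this sub] DERIV_const] show ?thesis
      by (simp add: F_def G_def)
  qed
  moreover have "\<bar>G s z\<bar> \<le> p * g z" if "s \<in> {0..t}" for s z
    using energy_deriv_integrand_bound[of s "fst z" "snd z"] that sub by (auto simp: G_def)
  moreover have "integrable lborel (F 0)" "integrable lborel (F t)"
    using integrable_energy_integrand t T_nonneg by (simp_all add: F_def)
  ultimately have "((\<lambda>s. \<integral>z. G s z \<partial>lborel) has_integral (\<integral>z. F t z \<partial>lborel) - (\<integral>z. F 0 z \<partial>lborel)) {0..t}"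
    using t dominating_integrable by (intro has_integral_parametric_derivative[where g="\<lambda>z. p * g z"]) auto
  then show ?thesis
    by (simp add: energy_def energy_deriv_def[abs_def] F_def G_def)
qed

lemma energy_continuous: "continuous_on {0..T} energy"
proof -
  have "energy_deriv integrable_on {0..T}"
    using energy_deriv_has_integral[of T] T_nonneg by (auto simp: integrable_on_def)
  then have "continuous_on {0..T} (\<lambda>u. energy 0 + integral {0..u} energy_deriv)"
    by (intro continuous_on_add continuous_on_const indefinite_integral_continuous_1)
  then show ?thesis
    by (rule continuous_on_eq) (use integral_unique[OF energy_deriv_has_integral] in auto)
qed

lemma energy_integral_inequality:
  assumes t: "t \<in> {0..T}"
  shows "energy t \<le> energy 0 + p * (p - 1) * c0\<^sup>2 / 2 * integral {0..t} energy"
proof -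
  have sub: "{0..t} \<subseteq> {0..T}"
    using t by auto
  have "energy t - energy 0 = integral {0..t} energy_deriv"
    using integral_unique[OF energy_deriv_has_integral[OF t]] by simp
  also have "\<dots> \<le> integral {0..t} (\<lambda>s. p * (p - 1) * c0\<^sup>2 / 2 * energy s)"
  proof (rule integral_le)
    show "energy_deriv integrable_on {0..t}"
      using energy_deriv_has_integral[OF t] by blast
    show "(\<lambda>s. p * (p - 1) * c0\<^sup>2 / 2 * energy s) integrable_on {0..t}"
      using integrable_on_cmult_left[OF integrable_continuous_interval[OF continuous_on_subset[OF energy_continuous sub]]]
      by simp
    fix s assume "s \<in> {0..t}"
    with sub have "energy_deriv s \<le> p * (p - 1) / 4 * c0\<^sup>2 * energy s"
      by (intro energy_deriv_le) auto
    also have "\<dots> \<le> p * (p - 1) * c0\<^sup>2 / 2 * energy s"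
      using p energy_nonneg[of s] by (intro mult_right_mono) auto
    finally show "energy_deriv s \<le> p * (p - 1) * c0\<^sup>2 / 2 * energy s" .
  qed
  finally show ?thesis
    by simp
qed

lemma energy_le_exp:
  assumes "t \<in> {0..T}"
  shows "energy t \<le> energy 0 * exp (p * (p - 1) * c0\<^sup>2 / 2 * t)"
  by (rule Gronwall_integral_inequality[OF energy_continuous _ energy_integral_inequality assms]) (use p in simp)

definition gauss_const :: real where
  "gauss_const = (2 * pi) powr (- real DIM('a) / 2)"

lemma gauss_const_pos: "0 < gauss_const"
  by (simp add: gauss_const_def)

lemma eta_density_times_Lp_integrand:
  assumes "s \<in> {0..T}"
  shows "ennreal (exp (- \<Phi> x) * (gauss_const * exp (- (norm v)\<^sup>2 / 2)))
      * ennreal (\<bar>m s x v * exp (Ham \<Phi> x v)\<bar> powr p)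
    = ennreal (gauss_const * (m s x v powr p * weight x v))"
proof -
  have "exp (- \<Phi> x) * (gauss_const * exp (- (norm v)\<^sup>2 / 2)) * \<bar>m s x v * exp (Ham \<Phi> x v)\<bar> powr p
      = exp (- \<Phi> x) * (gauss_const * exp (- (norm v)\<^sup>2 / 2)) * (m s x v powr p * exp (Ham \<Phi> x v * p))"
    using m_nonneg[OF assms] by (simp add: abs_mult powr_mult exp_powr_real)
  also have "\<dots> = gauss_const * (m s x v powr p * (exp (- \<Phi> x) * exp (- (norm v)\<^sup>2 / 2) * exp (Ham \<Phi> x v * p)))"
    by (simp only: ac_simps)
  also have "exp (- \<Phi> x) * exp (- (norm v)\<^sup>2 / 2) * exp (Ham \<Phi> x v * p) = weight x v"
    unfolding weight_def Ham_def by (simp add: exp_add[symmetric] field_simps)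
  finally have real_eq: "exp (- \<Phi> x) * (gauss_const * exp (- (norm v)\<^sup>2 / 2)) * \<bar>m s x v * exp (Ham \<Phi> x v)\<bar> powr p
      = gauss_const * (m s x v powr p * weight x v)" .
  have ennreal_eq: "ennreal (exp (- \<Phi> x) * (gauss_const * exp (- (norm v)\<^sup>2 / 2)))
      * ennreal (\<bar>m s x v * exp (Ham \<Phi> x v)\<bar> powr p)
    = ennreal (exp (- \<Phi> x) * (gauss_const * exp (- (norm v)\<^sup>2 / 2)) * \<bar>m s x v * exp (Ham \<Phi> x v)\<bar> powr p)"
    using gauss_const_pos by (intro ennreal_mult[symmetric]) auto
  show ?thesis
    unfolding ennreal_eq real_eq ..
qed

lemma Lp_eta_pow_eq_energy:
  assumes s: "s \<in> {0..T}"
  shows "Lp_eta_pow \<Phi> p (\<lambda>x v. m s x v * exp (Ham \<Phi> x v)) = ennreal (gauss_const * energy s)"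
proof -
  have "(\<lambda>z::'a \<times> 'a. exp (- \<Phi> (fst z)) * (gauss_const * exp (- (norm (snd z))\<^sup>2 / 2))) \<in> borel_measurable lborel"
    by (intro borel_measurable_lborel_continuous_onI continuous_intros continuous_on_compose2[OF Phi_cont]) auto
  then have "(\<lambda>z::'a \<times> 'a. ennreal (exp (- \<Phi> (fst z)) * (gauss_const * exp (- (norm (snd z))\<^sup>2 / 2))))
      \<in> borel_measurable lborel"
    by measurable
  then have density: "(\<lambda>(x, v). ennreal (exp (- \<Phi> x) * (gauss_const * exp (- (norm v)\<^sup>2 / 2))))
      \<in> borel_measurable (lborel :: ('a \<times> 'a) measure)"
    by (simp add: case_prod_beta)
  have "continuous_on UNIV (\<lambda>z. \<bar>m s (fst z) (snd z) * exp (Ham \<Phi> (fst z) (snd z))\<bar> powr p)"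
    unfolding Ham_def using p
    by (intro continuous_on_powr' continuous_intros m_continuous[OF s] continuous_on_compose2[OF Phi_cont]) auto
  from borel_measurable_lborel_continuous_onI[OF this]
  have integrand: "(\<lambda>z. ennreal (\<bar>m s (fst z) (snd z) * exp (Ham \<Phi> (fst z) (snd z))\<bar> powr p))
      \<in> borel_measurable lborel"
    by measurable
  have "Lp_eta_pow \<Phi> p (\<lambda>x v. m s x v * exp (Ham \<Phi> x v))
      = (\<integral>\<^sup>+ z. ennreal (gauss_const * (m s (fst z) (snd z) powr p * weight (fst z) (snd z))) \<partial>lborel)"
    unfolding Lp_eta_pow_def eta_def gauss_const_def[symmetric] nn_integral_density[OF density integrand]
    by (intro nn_integral_cong) (unfold case_prod_beta, rule eta_density_times_Lp_integrand[OF s])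
  also have "\<dots> = ennreal (\<integral>z. gauss_const * (m s (fst z) (snd z) powr p * weight (fst z) (snd z)) \<partial>lborel)"
    using integrable_energy_integrand[OF s] gauss_const_pos weight_pos
    by (intro nn_integral_eq_integral AE_I2) (simp_all add: less_imp_le)
  also have "\<dots> = ennreal (gauss_const * energy s)"
    by (simp add: energy_def)
  finally show ?thesis .
qed

lemma LpH_norm_eq_energy:
  assumes "s \<in> {0..T}"
  shows "LpH_norm \<Phi> p (m s) = energy s powr (1 / p)"
proof -
  have "(\<lambda>z. \<bar>m s (fst z) (snd z)\<bar> powr p * exp ((p - 1) * Ham \<Phi> (fst z) (snd z)))
      = (\<lambda>z. m s (fst z) (snd z) powr p * weight (fst z) (snd z))"
    using m_nonneg[OF assms] by (auto simp: fun_eq_iff weight_def)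
  then show ?thesis
    by (simp add: LpH_norm_def energy_def)
qed

lemma energy_integrable_on:
  assumes "t \<in> {0..T}"
  shows "energy integrable_on {0..t}"
  by (rule integrable_continuous_interval, rule continuous_on_subset[OF energy_continuous]) (use assms in auto)

lemma nn_integral_Lp_eta_pow:
  assumes t: "t \<in> {0..T}"
  shows "(\<integral>\<^sup>+ r\<in>{0..t}. Lp_eta_pow \<Phi> p (\<lambda>x v. m r x v * exp (Ham \<Phi> x v)) \<partial>lborel)
    = ennreal (gauss_const * integral {0..t} energy)"
proof -
  have "(\<integral>\<^sup>+ r\<in>{0..t}. Lp_eta_pow \<Phi> p (\<lambda>x v. m r x v * exp (Ham \<Phi> x v)) \<partial>lborel)
      = (\<integral>\<^sup>+ r. ennreal (indicator {0..t} r * (gauss_const * energy r)) \<partial>lborel)"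
    using t by (intro nn_integral_cong) (auto simp: Lp_eta_pow_eq_energy indicator_def)
  also have "\<dots> = ennreal (integral {0..t} (\<lambda>r. gauss_const * energy r))"
  proof (rule nn_integral_has_integral_lebesgue)
    show "0 \<le> gauss_const * energy r" for r
      using gauss_const_pos energy_nonneg[of r] by simp
    have "(\<lambda>r. gauss_const * energy r) integrable_on {0..t}"
      using integrable_on_cmult_left[OF energy_integrable_on[OF t], of gauss_const] by simp
    then show "((\<lambda>r. gauss_const * energy r) has_integral integral {0..t} (\<lambda>r. gauss_const * energy r)) {0..t}"
      by (rule integrable_integral)
  qed
  finally show ?thesis
    by simp
qed

theorem Lp_eta_integral_inequality:
  assumes t: "t \<in> {0..T}"
  shows "Lp_eta_pow \<Phi> p (\<lambda>x v. m t x v * exp (Ham \<Phi> x v))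
      \<le> Lp_eta_pow \<Phi> p (\<lambda>x v. m 0 x v * exp (Ham \<Phi> x v))
        + ennreal (p * (p - 1) * c0\<^sup>2 / 2) *
          (\<integral>\<^sup>+ r\<in>{0..t}. Lp_eta_pow \<Phi> p (\<lambda>x v. m r x v * exp (Ham \<Phi> x v)) \<partial>lborel)"
proof -
  have T0: "0 \<in> {0..T}"
    using T_nonneg by simp
  define K where "K = p * (p - 1) * c0\<^sup>2 / 2"
  define I where "I = gauss_const * integral {0..t} energy"
  have "0 \<le> K" "0 \<le> I" "0 \<le> gauss_const * energy 0"
    using p gauss_const_pos energy_nonneg[of 0]
      Henstock_Kurzweil_Integration.integral_nonneg[OF energy_integrable_on[OF t] energy_nonneg]
    by (simp_all add: K_def I_def)
  have "gauss_const * energy t \<le> gauss_const * energy 0 + K * I"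
    using mult_left_mono[OF energy_integral_inequality[OF t], of gauss_const] gauss_const_pos
    by (simp add: K_def I_def algebra_simps)
  then have "ennreal (gauss_const * energy t) \<le> ennreal (gauss_const * energy 0 + K * I)"
    by (rule ennreal_leI)
  also have "\<dots> = ennreal (gauss_const * energy 0) + ennreal K * ennreal I"
    using \<open>0 \<le> K\<close> \<open>0 \<le> I\<close> \<open>0 \<le> gauss_const * energy 0\<close> by (simp add: ennreal_plus ennreal_mult)
  finally show ?thesis
    unfolding nn_integral_Lp_eta_pow[OF t] Lp_eta_pow_eq_energy[OF t] Lp_eta_pow_eq_energy[OF T0] K_def I_def .
qed

theorem LpH_norm_bound:
  assumes t: "t \<in> {0..T}"
  shows "LpH_norm \<Phi> p (m t) \<le> LpH_norm \<Phi> p (m 0) * exp (c0\<^sup>2 * (p - 1) * t / 2)"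
proof -
  have T0: "0 \<in> {0..T}"
    using T_nonneg by simp
  have "LpH_norm \<Phi> p (m t) = energy t powr (1 / p)"
    by (rule LpH_norm_eq_energy[OF t])
  also have "\<dots> \<le> (energy 0 * exp (p * (p - 1) * c0\<^sup>2 / 2 * t)) powr (1 / p)"
    using energy_le_exp[OF t] energy_nonneg[of t] p by (intro powr_mono2) auto
  also have "\<dots> = energy 0 powr (1 / p) * exp (c0\<^sup>2 * (p - 1) * t / 2)"
    using energy_nonneg[of 0] p by (simp add: powr_mult exp_powr_real field_simps)
  also have "energy 0 powr (1 / p) = LpH_norm \<Phi> p (m 0)"
    by (rule LpH_norm_eq_energy[OF T0, symmetric])
  finally show ?thesis .
qed

end

lemma regular_VFP_solution_imp_VFP_solution:
  assumes "regular_VFP_solution \<Phi> gPhi gK \<gamma> T m" and "2 \<le> p" and "0 \<le> T"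
    and "\<And>x. (\<Phi> has_derivative (\<lambda>h. gPhi x \<bullet> h)) (at x)"
    and "\<And>x. norm (gPhi x) \<le> cPhi * (1 + norm x)"
    and "continuous_on UNIV gPhi" and "gK \<in> borel_measurable borel"
    and "\<And>t. t \<in> {0..T} \<Longrightarrow> AE x in lborel. norm (conv_field gK (xmarg (m t)) x) \<le> c0"
  shows "\<exists>mt mx mv mvv g. VFP_solution \<Phi> gPhi gK cPhi c0 \<gamma> T p m mt mx mv mvv g"
  using assms(1) unfolding regular_VFP_solution_def
proof (elim exE conjE, goal_cases)
  case (1 mt mx mv mvv)
  have "1 \<le> p"
    using assms(2) by simp
  from 1(12)[THEN spec, THEN mp, OF this, THEN spec[of _ 2]] obtain g where g_integrable: "integrable lborel g"
    and g_bound: "\<forall>t\<in>{0..T}. \<forall>x v. (1 + norm x + norm v) ^ 2 *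
      (\<bar>m t x v\<bar> + \<bar>mt t x v\<bar> + norm (mx t x v) + norm (mv t x v) + (\<Sum>b\<in>Basis. norm (mvv t x v b))) powr p
      * exp ((p - 1) * Ham \<Phi> x v) \<le> g (x, v)"
    by (elim exE conjE)
  have "VFP_solution \<Phi> gPhi gK cPhi c0 \<gamma> T p m mt mx mv mvv g"
    by (intro VFP_solution.intro)
      (fact assms(2-) 1(1,3-10,13)[rule_format] spec[OF 1(11)] g_integrable g_bound[rule_format])+
  then show ?case
    by blast
qed

theorem lemma5p3:
  fixes \<Phi> :: "'a::euclidean_space \<Rightarrow> real"
    and gradPhi :: "'a \<Rightarrow> 'a"
    and gradK :: "'a \<Rightarrow> 'a"
    and cPhi c0 T :: real
    and \<mu> :: "real \<Rightarrow> real \<Rightarrow> 'a \<Rightarrow> 'a \<Rightarrow> real"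
  assumes Phi_nonneg: "\<forall>x. \<Phi> x \<ge> 0"
    and Phi_loc_lip: "\<forall>x. \<exists>e>0. \<exists>L. L-lipschitz_on (ball x e) \<Phi>"
    and Phi_grad: "\<forall>x. (\<Phi> has_derivative (\<lambda>h. gradPhi x \<bullet> h)) (at x)"
    and Phi_grad_growth: "\<forall>x. norm (gradPhi x) \<le> cPhi * (1 + norm x)"
    and Phi_grad_lip: "cPhi-lipschitz_on UNIV gradPhi"
    and Phi_moments: "\<forall>r\<ge>1. \<exists>B. \<forall>x. norm (gradPhi x) powr r * exp (- \<Phi> x) \<le> B"
    and gradK_meas: "gradK \<in> borel_measurable borel"
    and T_nonneg: "T \<ge> 0"
    and sol: "\<forall>\<gamma>>0. regular_VFP_solution \<Phi> gradPhi gradK \<gamma> T (\<mu> \<gamma>)"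
    and c0_bound: "\<forall>\<gamma>>0. \<forall>t\<in>{0..T}. AE x in lborel.
         integrable lborel (\<lambda>y. xmarg (\<mu> \<gamma> t) y *\<^sub>R gradK (x - y)) \<and>
         norm (conv_field gradK (xmarg (\<mu> \<gamma> t)) x) \<le> c0"
  shows "\<forall>\<gamma>>0. \<forall>p\<ge>2. \<forall>t\<in>{0..T}.
     Lp_eta_pow \<Phi> p (\<lambda>x v. \<mu> \<gamma> t x v * exp (Ham \<Phi> x v))
       \<le> Lp_eta_pow \<Phi> p (\<lambda>x v. \<mu> \<gamma> 0 x v * exp (Ham \<Phi> x v))
         + ennreal (p * (p - 1) * c0\<^sup>2 / 2) *
           (\<integral>\<^sup>+ r\<in>{0..t}. Lp_eta_pow \<Phi> p (\<lambda>x v. \<mu> \<gamma> r x v * exp (Ham \<Phi> x v)) \<partial>lborel)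
     \<and> LpH_norm \<Phi> p (\<mu> \<gamma> t) \<le> LpH_norm \<Phi> p (\<mu> \<gamma> 0) * exp (c0\<^sup>2 * (p - 1) * t / 2)"
proof (intro allI impI ballI, goal_cases)
  case (1 \<gamma> p t)
  then have \<gamma>: "0 < \<gamma>" and p: "2 \<le> p" and t: "t \<in> {0..T}"
    by simp_all
  have "continuous_on UNIV gradPhi"
    using Phi_grad_lip by (rule lipschitz_on_continuous_on)
  moreover have "AE x in lborel. norm (conv_field gradK (xmarg (\<mu> \<gamma> s)) x) \<le> c0" if "s \<in> {0..T}" for s
    using c0_bound \<gamma> that by (auto elim: eventually_mono)
  ultimately obtain mt mx mv mvv g
    where solution: "VFP_solution \<Phi> gradPhi gradK cPhi c0 \<gamma> T p (\<mu> \<gamma>) mt mx mv mvv g"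
    using regular_VFP_solution_imp_VFP_solution[OF sol[rule_format, OF \<gamma>] p T_nonneg]
      Phi_grad Phi_grad_growth gradK_meas by blast
  show ?case
    using VFP_solution.Lp_eta_integral_inequality[OF solution t] VFP_solution.LpH_norm_bound[OF solution t] ..
qed

end
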